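(* Assume (A1) and (A3). Then for every $\bar\alpha\in\{0,1\}^m$ and every $i\in\{1,\dots,m\}$, the nonstandard derivative $[D^{NS}J(\bar\alpha)]_i$ exists (the defining one-sided limit exists), is unique and finite, and $$[D^{NS}J(\bar\alpha)]_i=\int_0^T\Big(\big(f(x^{\bar\alpha}(t),\bar\alpha+\mathbf 1_i)-f(x^{\bar\alpha}(t),\bar\alpha)\big)^\top\lambda^{\bar\alpha}(t)+r(x^{\bar\alpha}(t),\bar\alpha+\mathbf 1_i)-r(x^{\bar\alpha}(t),\bar\alpha)\Big)\,dt$$ if $\bar\alpha_i=0$, and $$[D^{NS}J(\bar\alpha)]_i=\int_0^T\Big(\big(f(x^{\bar\alpha}(t),\bar\alpha)-f(x^{\bar\alpha}(t),\bar\alpha-\mathbf 1_i)\big)^\top\lambda^{\bar\alpha}(t)+r(x^{\bar\alpha}(t),\bar\alpha)-r(x^{\bar\alpha}(t),\bar\alpha-\mathbf 1_i)\Big)\,dt$$ if $\bar\alpha_i=1$.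
   Context: Fix integers $n,m\ge 1$, a horizon $T>0$, a set $\mathcal X\subseteq\mathbb R^n$ and an initial state $\mathbf x\in\mathcal X$. Let $f:\mathbb R^n\times\mathbb R^m\to\mathbb R^n$, $r:\mathbb R^n\times\mathbb R^m\to\mathbb R$, $q:\mathbb R^n\to\mathbb R$. For $\beta\in\{0,1\}^m$, $x^\beta:[0,T]\to\mathbb R^n$ is the solution of $\dot x(t)=f(x(t),\beta)$, $x(0)=\mathbf x$ (assumed to exist uniquely on $[0,T]$). For a function $z:[0,T]\to\mathbb R^n$ in $L^2$ with a well-defined value $z(T)$ and $\beta\in\mathbb R^m$, set $\mathcal J(z,\beta)=\int_0^T r(z(t),\beta)\,dt+q(z(T))$; the payoff is $J(\beta)=\mathcal J(x^\beta,\beta)$. $\mathbf 1_i$ denotes the $i$-th standard basis vector of $\mathbb R^m$. (A1): for each $\alpha\in\{0,1\}^m$, $f(\cdot,\alpha)$ is twice differentiable with continuous second derivative and globally Lipschitz on $\mathcal X$. (A3): for each $\alpha\in\{0,1\}^m$, $r(\cdot,\alpha)$ and $q$ are continuously differentiable. Adjoint: for $\bar\alpha\in\{0,1\}^m$, $\lambda^{\bar\alpha}:[0,T]\to\mathbb R^n$ solves $-\dot\lambda(t)=\frac{\partial f}{\partial x}(x^{\bar\alpha}(t),\bar\alpha)^\top\lambda(t)+\frac{\partial r}{\partial x}(x^{\bar\alpha}(t),\bar\alpha)^\top$, $\lambda(T)=\frac{\partial q}{\partial x}(x^{\bar\alpha}(T))^\top$ (i.e. $-\dot\lambda=\partial_x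 H^\top$ with Hamiltonian $H(x,\lambda,\alpha)=\lambda^\top f(x,\alpha)+r(x,\alpha)$). $\epsilon$-variational system: for $\bar\alpha,\alpha\in\{0,1\}^m$ and $\epsilon\in[0,1]$, $x^{\epsilon(\bar\alpha,\alpha)}$ is the solution of $\dot x(t)=(1-\epsilon)f(x(t),\bar\alpha)+\epsilon f(x(t),\alpha)$, $x(0)=\mathbf x$, and $\mathcal J^{\epsilon(\bar\alpha,\alpha)}(z):=(1-\epsilon)\mathcal J(z,\bar\alpha)+\epsilon\mathcal J(z,\alpha)$. Nonstandard derivative: $[D^{NS}J(\bar\alpha)]_i:=\lim_{\epsilon\to0^+}\frac1\epsilon\big[\mathcal J^{\epsilon(\bar\alpha,\bar\alpha+\mathbf 1_i)}(x^{\epsilon(\bar\alpha,\bar\alpha+\mathbf 1_i)})-\mathcal J(x^{\bar\alpha},\bar\alpha)\big]$ if $\bar\alpha_i=0$, and $[D^{NS}J(\bar\alpha)]_i:=\lim_{\epsilon\to0^+}\frac1\epsilon\big[\mathcal J(x^{\bar\alpha},\bar\alpha)-\mathcal J^{\epsilon(\bar\alpha,\bar\alpha-\mathbf 1_i)}(x^{\epsilon(\bar\alpha,\bar\alpha-\mathbf 1_i)})\big]$ if $\bar\alpha_i=1$. *)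

theory Defs
  imports "HOL-Analysis.Analysis"
begin

definition binary :: "real^'m \<Rightarrow> bool" where
  "binary \<beta> \<longleftrightarrow> (\<forall>j. \<beta> $ j \<in> {0, 1})"

definition C2_fun :: "('a::euclidean_space \<Rightarrow> 'b::real_normed_vector) \<Rightarrow> bool" where
  "C2_fun g \<longleftrightarrow> (\<exists>Dg D2g.
      (\<forall>x. (g has_derivative blinfun_apply (Dg x)) (at x)) \<and>
      (\<forall>x. (Dg has_derivative blinfun_apply (D2g x)) (at x)) \<and>
      continuous_on UNIV D2g)"

definition C1_fun :: "('a::euclidean_space \<Rightarrow> 'b::real_normed_vector) \<Rightarrow> bool" where
  "C1_fun g \<longleftrightarrow> (\<exists>Dg.
      (\<forall>x. (g has_derivative blinfun_apply (Dg x)) (at x)) \<and> continuous_on UNIV Dg)"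

text \<open>z solves z' = F(z), z(0) = x0 on [0,T]; by convention z is extended by 0
  outside [0,T] so that "the solution" is a well-defined function.\<close>
definition ode_sol :: "real \<Rightarrow> ('v::real_normed_vector \<Rightarrow> 'v) \<Rightarrow> 'v \<Rightarrow> (real \<Rightarrow> 'v) \<Rightarrow> bool" where
  "ode_sol T F x0 z \<longleftrightarrow> z 0 = x0 \<and>
     (\<forall>t\<in>{0..T}. (z has_vector_derivative F (z t)) (at t within {0..T})) \<and>
     (\<forall>t. t \<notin> {0..T} \<longrightarrow> z t = 0)"

definition traj :: "real \<Rightarrow> ('v::real_normed_vector \<Rightarrow> 'v) \<Rightarrow> 'v \<Rightarrow> real \<Rightarrow> 'v" where
  "traj T F x0 = (THE z. ode_sol T F x0 z)"

definition xsol :: "real \<Rightarrow> (real^'n \<Rightarrow> real^'m \<Rightarrow> real^'n) \<Rightarrow> real^'n \<Rightarrow> real^'m \<Rightarrow> real \<Rightarrow> real^'n" where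
  "xsol T f x0 \<beta> = traj T (\<lambda>x. f x \<beta>) x0"

definition xeps :: "real \<Rightarrow> (real^'n \<Rightarrow> real^'m \<Rightarrow> real^'n) \<Rightarrow> real^'n \<Rightarrow> real^'m \<Rightarrow> real^'m \<Rightarrow> real \<Rightarrow> real \<Rightarrow> real^'n" where
  "xeps T f x0 ab a \<epsilon> = traj T (\<lambda>x. (1 - \<epsilon>) *\<^sub>R f x ab + \<epsilon> *\<^sub>R f x a) x0"

definition Jc :: "real \<Rightarrow> (real^'n \<Rightarrow> real^'m \<Rightarrow> real) \<Rightarrow> (real^'n \<Rightarrow> real) \<Rightarrow> (real \<Rightarrow> real^'n) \<Rightarrow> real^'m \<Rightarrow> real" where
  "Jc T r q z \<beta> = integral {0..T} (\<lambda>t. r (z t) \<beta>) + q (z T)"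

definition Jeps :: "real \<Rightarrow> (real^'n \<Rightarrow> real^'m \<Rightarrow> real) \<Rightarrow> (real^'n \<Rightarrow> real) \<Rightarrow> real^'m \<Rightarrow> real^'m \<Rightarrow> real \<Rightarrow> (real \<Rightarrow> real^'n) \<Rightarrow> real" where
  "Jeps T r q ab a \<epsilon> z = (1 - \<epsilon>) * Jc T r q z ab + \<epsilon> * Jc T r q z a"

text \<open>Adjoint (costate) equation along x^abar:
  -lambda' = (df/dx)^T lambda + (dr/dx)^T, lambda(T) = (dq/dx)^T; transposes of the
  Frechet derivatives are expressed with the library's adjoint operator.\<close>
definition costate_sol :: "real \<Rightarrow> (real^'n \<Rightarrow> real^'m \<Rightarrow> real^'n) \<Rightarrow> (real^'n \<Rightarrow> real^'m \<Rightarrow> real) \<Rightarrow> (real^'n \<Rightarrow> real) \<Rightarrow> real^'n \<Rightarrow> real^'m \<Rightarrow> (real \<Rightarrow> real^'n) \<Rightarrow> bool" where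
  "costate_sol T f r q x0 ab lam \<longleftrightarrow>
     lam T = adjoint (frechet_derivative q (at (xsol T f x0 ab T))) 1 \<and>
     (\<forall>t\<in>{0..T}. (lam has_vector_derivative
        - (adjoint (frechet_derivative (\<lambda>y. f y ab) (at (xsol T f x0 ab t))) (lam t)
           + adjoint (frechet_derivative (\<lambda>y. r y ab) (at (xsol T f x0 ab t))) 1))
        (at t within {0..T})) \<and>
     (\<forall>t. t \<notin> {0..T} \<longrightarrow> lam t = 0)"

definition costate :: "real \<Rightarrow> (real^'n \<Rightarrow> real^'m \<Rightarrow> real^'n) \<Rightarrow> (real^'n \<Rightarrow> real^'m \<Rightarrow> real) \<Rightarrow> (real^'n \<Rightarrow> real) \<Rightarrow> real^'n \<Rightarrow> real^'m \<Rightarrow> real \<Rightarrow> real^'n" where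
  "costate T f r q x0 ab = (THE lam. costate_sol T f r q x0 ab lam)"

end

theory Submission
  imports Defs
begin

text \<open>Let \<open>x\<close> be the trajectory for the control \<open>ab\<close>, \<open>y\<^sub>\<epsilon>\<close> the trajectory of the relaxed field
  \<open>(1 - \<epsilon>) f(\<cdot>, ab) + \<epsilon> f(\<cdot>, a)\<close> with \<open>a = ab \<plusminus> \<one>\<^sub>i\<close>, and \<open>\<lambda>\<close> the costate along \<open>x\<close>.
  Differentiating \<open>\<lambda> \<bullet> (y\<^sub>\<epsilon> - x)\<close> and integrating over \<open>[0, T]\<close> shows that the change of the payoff
  equals \<open>\<epsilon>\<close> times the integral of the Hamiltonian difference \<open>H(y\<^sub>\<epsilon>, \<lambda>, a) - H(y\<^sub>\<epsilon>, \<lambda>, ab)\<close>,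
  up to the linearisation errors of \<open>r\<close>, \<open>f\<close> and \<open>q\<close> at \<open>x\<close>. Gronwall's inequality gives
  \<open>\<parallel>y\<^sub>\<epsilon> - x\<parallel> = O(\<epsilon>)\<close>, so these errors are \<open>o(\<epsilon>)\<close> by uniform continuity of the derivatives
  on compact sets, while the Hamiltonian difference converges uniformly to its value along \<open>x\<close>.
  For \<open>ab\<^sub>i = 1\<close> the difference quotient is taken in the other order, which flips the sign.
  The relaxed trajectories and the costate are obtained by Picard iteration.\<close>

section \<open>Gronwall's inequality and Picard iteration\<close>

lemma gronwall_exp_bound:
  fixes \<phi> :: "real \<Rightarrow> real"
  assumes cont: "continuous_on {0..T} \<phi>" and L: "0 \<le> L"
    and le: "\<And>t. t \<in> {0..T} \<Longrightarrow> \<phi> t \<le> c + L * integral {0..t} \<phi>"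
    and t: "t \<in> {0..T}"
  shows "\<phi> t \<le> c * exp (L * t)"
proof (cases "L = 0")
  case True
  then show ?thesis using le[OF t] by simp
next
  case False
  with L have L: "0 < L" by simp
  define w where "w u = integral {0..u} \<phi>" for u
  \<comment> \<open>\<open>k\<close> is nonincreasing because \<open>w' = \<phi> \<le> c + L w\<close>.\<close>
  define k where "k u = exp (-L*u) * (w u + c/L)" for u
  have w_cont: "continuous_on {0..T} w"
    unfolding w_def by (rule indefinite_integral_continuous_1[OF integrable_continuous_real[OF cont]])
  have w_deriv: "(w has_real_derivative \<phi> x) (at x)" if "0 < x" "x < T" for x
  proof -
    have "(w has_vector_derivative \<phi> x) (at x within {0..T})"
      unfolding w_def using integral_has_vector_derivative[OF cont] that by auto
    moreover have "at x within {0..T} = at x"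
      using that by (intro at_within_interior) auto
    ultimately show ?thesis by (simp add: has_real_derivative_iff_has_vector_derivative)
  qed
  have "k t \<le> k 0"
  proof (rule DERIV_nonpos_imp_decreasing_open[of 0 t k])
    show "continuous_on {0..t} k"
      unfolding k_def using t by (intro continuous_intros continuous_on_subset[OF w_cont]) auto
    fix x assume x: "0 < x" "x < t"
    have "(w has_real_derivative \<phi> x) (at x)" using x t by (intro w_deriv) auto
    hence "(k has_real_derivative exp (-L*x) * (\<phi> x - L * (w x + c/L))) (at x)"
      unfolding k_def by (auto intro!: derivative_eq_intros simp: algebra_simps)
    moreover have "\<phi> x - L * (w x + c/L) \<le> 0"
    proof -
      have "L * (w x + c/L) = c + L * w x" using L by (simp add: field_simps)
      thus ?thesis using le[of x] x t unfolding w_def by simp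
    qed
    ultimately show "\<exists>y. (k has_real_derivative y) (at x) \<and> y \<le> 0"
      by (intro exI conjI) (auto intro: mult_nonneg_nonpos)
  qed (use t in auto)
  hence "w t + c/L \<le> c/L * exp (L*t)"
    by (simp add: k_def w_def exp_minus field_simps)
  hence "L * (w t + c/L) \<le> L * (c/L * exp (L*t))"
    using L by (intro mult_left_mono) auto
  moreover have "L * (w t + c/L) = c + L * w t" "L * (c/L * exp (L*t)) = c * exp (L*t)"
    using L by (simp_all add: field_simps)
  ultimately have "c + L * w t \<le> c * exp (L*t)" by simp
  thus ?thesis using le[OF t] unfolding w_def by linarith
qed

lemma integral_equations_solutions_close:
  fixes z1 z2 h1 h2 :: "real \<Rightarrow> 'v::banach"
  assumes z1: "continuous_on {0..T} z1" and z2: "continuous_on {0..T} z2"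
    and h1: "\<And>t. t \<in> {0..T} \<Longrightarrow> (h1 has_integral (z1 t - x0)) {0..t}"
    and h2: "\<And>t. t \<in> {0..T} \<Longrightarrow> (h2 has_integral (z2 t - x0)) {0..t}"
    and L: "0 \<le> L" and c: "0 \<le> c"
    and h_diff: "\<And>s. s \<in> {0..T} \<Longrightarrow> norm (h1 s - h2 s) \<le> c + L * norm (z1 s - z2 s)"
    and t: "t \<in> {0..T}"
  shows "norm (z1 t - z2 t) \<le> c * T * exp (L * t)"
proof -
  define \<phi> where "\<phi> s = norm (z1 s - z2 s)" for s
  have \<phi>_cont: "continuous_on {0..T} \<phi>" unfolding \<phi>_def by (intro continuous_intros z1 z2)
  have "\<phi> u \<le> c * T + L * integral {0..u} \<phi>" if u: "u \<in> {0..T}" for u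
  proof -
    have \<phi>_int: "\<phi> integrable_on {0..u}"
      using u by (intro integrable_continuous_real continuous_on_subset[OF \<phi>_cont]) auto
    have h: "((\<lambda>s. h1 s - h2 s) has_integral (z1 u - z2 u)) {0..u}"
      using has_integral_diff[OF h1[OF u] h2[OF u]] by simp
    have "\<phi> u = norm (integral {0..u} (\<lambda>s. h1 s - h2 s))"
      using h unfolding \<phi>_def by (simp add: integral_unique)
    also have "\<dots> \<le> integral {0..u} (\<lambda>s. c + L * \<phi> s)"
      using u h_diff
      by (intro integral_norm_bound_integral has_integral_integrable[OF h] integrable_continuous_real
          continuous_intros continuous_on_subset[OF \<phi>_cont]) (auto simp: \<phi>_def)
    also have "\<dots> = c * u + L * integral {0..u} \<phi>"
      using u \<phi>_int by (subst integral_add) (auto intro: integrable_on_mult_right)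
    also have "\<dots> \<le> c * T + L * integral {0..u} \<phi>"
      using u c by (auto intro: mult_left_mono)
    finally show ?thesis .
  qed
  from gronwall_exp_bound[OF \<phi>_cont L this t] show ?thesis unfolding \<phi>_def .
qed

lemma continuous_on_lipschitz_compose:
  fixes F :: "real \<Rightarrow> 'a::metric_space \<Rightarrow> 'b::real_normed_vector"
  assumes F_cont: "\<And>u. continuous_on S (\<lambda>t. F t u)"
    and F_lip: "\<And>t. t \<in> S \<Longrightarrow> L-lipschitz_on UNIV (F t)"
    and z: "continuous_on S z"
  shows "continuous_on S (\<lambda>s. F s (z s))"
  unfolding continuous_on_def
proof
  fix s0 assume s0: "s0 \<in> S"
  have "((\<lambda>s. L * dist (z s) (z s0)) \<longlongrightarrow> L * dist (z s0) (z s0)) (at s0 within S)"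
    using z s0 by (intro tendsto_intros) (simp add: continuous_on_def)
  hence "((\<lambda>s. L * dist (z s) (z s0)) \<longlongrightarrow> 0) (at s0 within S)" by simp
  hence "((\<lambda>s. F s (z s) - F s (z s0)) \<longlongrightarrow> 0) (at s0 within S)"
    by (rule Lim_null_comparison[rotated])
       (auto simp: eventually_at_filter dist_norm[symmetric]
         intro!: always_eventually lipschitz_onD[OF F_lip])
  moreover have "((\<lambda>s. F s (z s0)) \<longlongrightarrow> F s0 (z s0)) (at s0 within S)"
    using F_cont s0 by (simp add: continuous_on_def)
  ultimately show "((\<lambda>s. F s (z s)) \<longlongrightarrow> F s0 (z s0)) (at s0 within S)"
    using tendsto_add by fastforce
qed

lemma uniform_limit_lipschitz_compose:
  fixes \<Phi> :: "'s \<Rightarrow> 'a::metric_space \<Rightarrow> 'b::metric_space"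
  assumes y: "uniform_limit S y x F"
    and lip: "\<And>t. t \<in> S \<Longrightarrow> L-lipschitz_on K (\<Phi> t)"
    and yK: "eventually (\<lambda>\<epsilon>. \<forall>t\<in>S. y \<epsilon> t \<in> K) F" and xK: "\<And>t. t \<in> S \<Longrightarrow> x t \<in> K"
  shows "uniform_limit S (\<lambda>\<epsilon> t. \<Phi> t (y \<epsilon> t)) (\<lambda>t. \<Phi> t (x t)) F"
proof (rule uniform_limitI)
  fix e :: real assume e: "0 < e"
  have "0 < e / (\<bar>L\<bar> + 1)" using e by simp
  from yK uniform_limitD[OF y this] show "\<forall>\<^sub>F \<epsilon> in F. \<forall>t\<in>S. dist (\<Phi> t (y \<epsilon> t)) (\<Phi> t (x t)) < e"
  proof eventually_elim
    case (elim \<epsilon>)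
    show ?case
    proof
      fix t assume t: "t \<in> S"
      have L: "0 \<le> L" using lipschitz_on_nonneg[OF lip[OF t]] .
      have "dist (\<Phi> t (y \<epsilon> t)) (\<Phi> t (x t)) \<le> L * dist (y \<epsilon> t) (x t)"
        using elim t xK by (intro lipschitz_onD[OF lip]) auto
      also have "\<dots> \<le> L * (e / (\<bar>L\<bar> + 1))"
        using elim t L by (intro mult_left_mono) auto
      also have "\<dots> < e" using e L by (simp add: field_simps)
      finally show "dist (\<Phi> t (y \<epsilon> t)) (\<Phi> t (x t)) < e" .
    qed
  qed
qed

lemma has_integral_power_div_fact:
  fixes t :: real
  assumes "0 \<le> t"
  shows "((\<lambda>s. s^n / fact n) has_integral (t^Suc n / fact (Suc n))) {0..t}"
proof -
  have "((\<lambda>s. s^Suc n / fact (Suc n)) has_vector_derivative s^n / fact n) (at s within {0..t})" for s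
  proof -
    have "((\<lambda>s. s^Suc n / fact (Suc n)) has_real_derivative (real (Suc n) * s^n) / fact (Suc n))
        (at s within {0..t})"
      by (rule derivative_eq_intros refl | simp)+
    thus ?thesis by (simp add: has_real_derivative_iff_has_vector_derivative fact_Suc del: of_nat_Suc)
  qed
  from fundamental_theorem_of_calculus[OF assms this] show ?thesis by simp
qed

primrec picard_iterate :: "(real \<Rightarrow> 'v::banach \<Rightarrow> 'v) \<Rightarrow> 'v \<Rightarrow> nat \<Rightarrow> real \<Rightarrow> 'v" where
  "picard_iterate F x0 0 = (\<lambda>t. x0)"
| "picard_iterate F x0 (Suc k) = (\<lambda>t. x0 + integral {0..t} (\<lambda>s. F s (picard_iterate F x0 k s)))"

lemma continuous_on_picard_iterate:
  fixes F :: "real \<Rightarrow> 'v::banach \<Rightarrow> 'v"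
  assumes F_cont: "\<And>u. continuous_on {0..T} (\<lambda>t. F t u)"
    and F_lip: "\<And>t. t \<in> {0..T} \<Longrightarrow> L-lipschitz_on UNIV (F t)"
  shows "continuous_on {0..T} (picard_iterate F x0 k)"
proof (induction k)
  case (Suc k)
  have "continuous_on {0..T} (\<lambda>s. F s (picard_iterate F x0 k s))"
    by (rule continuous_on_lipschitz_compose[OF F_cont F_lip Suc])
  hence "continuous_on {0..T} (\<lambda>t. integral {0..t} (\<lambda>s. F s (picard_iterate F x0 k s)))"
    by (intro indefinite_integral_continuous_1 integrable_continuous_real)
  thus ?case by (simp add: continuous_intros)
qed simp

lemma picard_iterate_step_bound:
  fixes F :: "real \<Rightarrow> 'v::banach \<Rightarrow> 'v"
  assumes F_cont: "\<And>u. continuous_on {0..T} (\<lambda>t. F t u)"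
    and F_lip: "\<And>t. t \<in> {0..T} \<Longrightarrow> L-lipschitz_on UNIV (F t)"
    and M: "\<And>s. s \<in> {0..T} \<Longrightarrow> norm (F s x0) \<le> M"
    and t: "t \<in> {0..T}"
  shows "norm (picard_iterate F x0 (Suc k) t - picard_iterate F x0 k t) \<le> M * L^k * t^Suc k / fact (Suc k)"
  using t
proof (induction k arbitrary: t)
  case 0
  have "norm (integral {0..t} (\<lambda>s. F s x0)) \<le> integral {0..t} (\<lambda>s. M)"
    using 0 M by (intro integral_norm_bound_integral integrable_continuous_real
        continuous_on_subset[OF F_cont]) auto
  thus ?case using 0 by (simp add: mult.commute)
next
  case (Suc k)
  let ?p = "picard_iterate F x0"
  have L: "0 \<le> L" using lipschitz_on_nonneg[OF F_lip[OF Suc.prems]] .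
  have int: "(\<lambda>s. F s (?p j s)) integrable_on {0..t}" for j
    using Suc.prems by (intro integrable_continuous_real continuous_on_subset[OF
        continuous_on_lipschitz_compose[OF F_cont F_lip continuous_on_picard_iterate[OF F_cont F_lip]]]) auto
  have "?p (Suc (Suc k)) t - ?p (Suc k) t
      = integral {0..t} (\<lambda>s. F s (?p (Suc k) s)) - integral {0..t} (\<lambda>s. F s (?p k s))"
    by (simp only: picard_iterate.simps(2) add_diff_cancel_left)
  also have "\<dots> = integral {0..t} (\<lambda>s. F s (?p (Suc k) s) - F s (?p k s))"
    by (rule integral_diff[symmetric, OF int int])
  also have "norm \<dots> \<le> integral {0..t} (\<lambda>s. (M * L^Suc k) * (s^Suc k / fact (Suc k)))"
  proof (rule integral_norm_bound_integral)
    show "(\<lambda>s. F s (?p (Suc k) s) - F s (?p k s)) integrable_on {0..t}"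
      by (intro integrable_diff int)
    show "(\<lambda>s. (M * L^Suc k) * (s^Suc k / fact (Suc k))) integrable_on {0..t}"
      using Suc.prems by (intro integrable_on_mult_right has_integral_integrable[OF has_integral_power_div_fact]) auto
    fix s assume s: "s \<in> {0..t}"
    hence sT: "s \<in> {0..T}" using Suc.prems by auto
    have "norm (F s (?p (Suc k) s) - F s (?p k s)) \<le> L * norm (?p (Suc k) s - ?p k s)"
      by (rule lipschitz_on_normD[OF F_lip[OF sT]]) auto
    also have "\<dots> \<le> L * (M * L^k * s^Suc k / fact (Suc k))"
      using Suc.IH[OF sT] L by (intro mult_left_mono) auto
    finally show "norm (F s (?p (Suc k) s) - F s (?p k s)) \<le> (M * L^Suc k) * (s^Suc k / fact (Suc k))"
      by (simp add: algebra_simps)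
  qed
  also have "\<dots> = (M * L^Suc k) * (t^Suc (Suc k) / fact (Suc (Suc k)))"
    using Suc.prems by (intro integral_unique has_integral_mult_right has_integral_power_div_fact) auto
  finally show ?case by simp
qed

text \<open>The differences of consecutive iterates are dominated by the terms \<open>M T (L T)\<^sup>k / k!\<close> of an
  exponential series, so the Weierstrass M-test applies.\<close>

lemma uniformly_convergent_picard_iterate:
  fixes F :: "real \<Rightarrow> 'v::banach \<Rightarrow> 'v"
  assumes T: "0 \<le> T" and F_cont: "\<And>u. continuous_on {0..T} (\<lambda>t. F t u)"
    and F_lip: "\<And>t. t \<in> {0..T} \<Longrightarrow> L-lipschitz_on UNIV (F t)"
  shows "uniformly_convergent_on {0..T} (picard_iterate F x0)"
proof -
  let ?S = "{0..T}" and ?p = "picard_iterate F x0"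
  have L: "0 \<le> L" using lipschitz_on_nonneg[OF F_lip] T by auto
  obtain M where M0: "0 \<le> M" and M: "\<And>s. s \<in> ?S \<Longrightarrow> norm (F s x0) \<le> M"
    using continuous_on_compact_bound[OF compact_Icc F_cont] by blast
  define b where "b k = M * T * ((L * T)^k / fact k)" for k
  have b: "norm (?p (Suc k) t - ?p k t) \<le> b k" if t: "t \<in> ?S" for k t
  proof -
    have "t^Suc k \<le> T^Suc k" using t by (intro power_mono) auto
    moreover have "fact k \<le> (fact (Suc k) :: real)" by (rule fact_mono) simp
    ultimately have "M * L^k * t^Suc k / fact (Suc k) \<le> M * L^k * T^Suc k / fact k"
      using M0 L T by (intro frac_le mult_left_mono) auto
    also have "\<dots> = b k" by (simp add: b_def power_mult_distrib)
    finally have "M * L^k * t^Suc k / fact (Suc k) \<le> b k" .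
    moreover have "norm (?p (Suc k) t - ?p k t) \<le> M * L^k * t^Suc k / fact (Suc k)"
      by (rule picard_iterate_step_bound[OF F_cont F_lip M t])
    ultimately show ?thesis by linarith
  qed
  have "summable b"
    unfolding b_def using summable_exp_generic[of "L * T"]
    by (intro summable_mult) (simp add: divide_inverse mult.commute)
  with b have "uniformly_convergent_on ?S (\<lambda>k t. \<Sum>j<k. ?p (Suc j) t - ?p j t)"
    by (rule Weierstrass_m_test')
  moreover have "(\<Sum>j<k. ?p (Suc j) t - ?p j t) = ?p k t - x0" for k t
    unfolding sum_lessThan_telescope[of "\<lambda>j. ?p j t"] by simp
  ultimately have "uniformly_convergent_on ?S (\<lambda>k t. ?p k t - x0)" by simp
  then obtain z where "uniform_limit ?S (\<lambda>k t. ?p k t - x0) z sequentially"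
    unfolding uniformly_convergent_on_def by blast
  hence "uniform_limit ?S (\<lambda>k t. x0 + (?p k t - x0)) (\<lambda>t. x0 + z t) sequentially"
    by (intro uniform_limit_intros)
  thus ?thesis unfolding uniformly_convergent_on_def by auto
qed

lemma integral_equation_solvable:
  fixes F :: "real \<Rightarrow> 'v::banach \<Rightarrow> 'v"
  assumes T: "0 \<le> T" and F_cont: "\<And>u. continuous_on {0..T} (\<lambda>t. F t u)"
    and F_lip: "\<And>t. t \<in> {0..T} \<Longrightarrow> L-lipschitz_on UNIV (F t)"
  obtains z where "continuous_on {0..T} z"
    "\<And>t. t \<in> {0..T} \<Longrightarrow> z t = x0 + integral {0..t} (\<lambda>s. F s (z s))"
proof -
  let ?S = "{0..T}" and ?p = "picard_iterate F x0"
  obtain z where lim: "uniform_limit ?S ?p z sequentially"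
    using uniformly_convergent_picard_iterate[OF T F_cont F_lip] unfolding uniformly_convergent_on_def by blast
  have p_cont: "continuous_on ?S (?p k)" for k by (rule continuous_on_picard_iterate[OF F_cont F_lip])
  have z_cont: "continuous_on ?S z"
    by (rule uniform_limit_theorem[OF always_eventually[OF allI[OF p_cont]] lim trivial_limit_sequentially])
  have "z t = x0 + integral {0..t} (\<lambda>s. F s (z s))" if t: "t \<in> ?S" for t
  proof -
    have sub: "{0..t} \<subseteq> ?S" using t by auto
    have ul: "uniform_limit {0..t} (\<lambda>k s. F s (?p k s)) (\<lambda>s. F s (z s)) sequentially"
      by (rule uniform_limit_lipschitz_compose[OF uniform_limit_on_subset[OF lim sub], where L=L and K=UNIV])
        (use sub F_lip in auto)
    have cont: "continuous_on {0..t} (\<lambda>s. F s (?p k s))" for k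
      by (rule continuous_on_subset[OF continuous_on_lipschitz_compose[OF F_cont F_lip p_cont] sub])
    obtain I J where I: "\<And>k. ((\<lambda>s. F s (?p k s)) has_integral I k) {0..t}"
        and J: "((\<lambda>s. F s (z s)) has_integral J) {0..t}" and IJ: "I \<longlonglongrightarrow> J"
      using uniform_limit_integral[OF ul cont sequentially_bot] by blast
    have "?p (Suc k) t = x0 + I k" for k
      using integral_unique[OF I[of k]] by simp
    hence "(\<lambda>k. ?p (Suc k) t) \<longlonglongrightarrow> x0 + integral {0..t} (\<lambda>s. F s (z s))"
      using tendsto_add[OF tendsto_const IJ] integral_unique[OF J] by simp
    with LIMSEQ_Suc[OF tendsto_uniform_limitI[OF lim t]] show ?thesis
      by (rule LIMSEQ_unique)
  qed
  with z_cont that show ?thesis by blast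
qed

section \<open>Solutions of ordinary differential equations\<close>

lemma has_vector_derivative_imp_has_integral:
  fixes z :: "real \<Rightarrow> 'v::banach"
  assumes "\<And>s. s \<in> {0..T} \<Longrightarrow> (z has_vector_derivative h s) (at s within {0..T})"
    and t: "t \<in> {0..T}"
  shows "(h has_integral (z t - z 0)) {0..t}"
proof (rule fundamental_theorem_of_calculus)
  show "0 \<le> t" using t by auto
  fix s assume "s \<in> {0..t}"
  with t assms(1)[of s] show "(z has_vector_derivative h s) (at s within {0..t})"
    by (auto intro: has_vector_derivative_within_subset)
qed

lemma integral_equation_has_vector_derivative:
  fixes h :: "real \<Rightarrow> 'v::banach"
  assumes h: "continuous_on {0..T} h" and z: "\<And>t. t \<in> {0..T} \<Longrightarrow> z t = x0 + integral {0..t} h"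
    and t: "t \<in> {0..T}"
  shows "(z has_vector_derivative h t) (at t within {0..T})"
proof -
  have "((\<lambda>u. x0 + integral {0..u} h) has_vector_derivative h t) (at t within {0..T})"
    using has_vector_derivative_add[OF has_vector_derivative_const integral_has_vector_derivative[OF h t]]
    by simp
  thus ?thesis using has_vector_derivative_transform[OF t z] by simp
qed

lemma has_vector_derivative_imp_continuous_on:
  assumes "\<And>t. t \<in> S \<Longrightarrow> (z has_vector_derivative z' t) (at t within S)"
  shows "continuous_on S z"
  unfolding continuous_on_eq_continuous_within using assms by (blast intro: has_vector_derivative_continuous)

lemma ode_sol_continuous: "ode_sol T G x0 z \<Longrightarrow> continuous_on {0..T} z"
  using has_vector_derivative_imp_continuous_on[of "{0..T}" z "\<lambda>t. G (z t)"] unfolding ode_sol_def by blast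

lemma ode_sol_has_integral:
  fixes z :: "real \<Rightarrow> 'v::banach"
  assumes "ode_sol T G x0 z" "t \<in> {0..T}"
  shows "((\<lambda>s. G (z s)) has_integral (z t - x0)) {0..t}"
  using assms has_vector_derivative_imp_has_integral[of T z "\<lambda>s. G (z s)" t]
  unfolding ode_sol_def by auto

lemma ode_sol_of_integral_equation:
  fixes h :: "real \<Rightarrow> 'v::banach"
  assumes T: "0 \<le> T" and h: "continuous_on {0..T} h"
    and z: "\<And>t. t \<in> {0..T} \<Longrightarrow> z t = x0 + integral {0..t} h"
    and hG: "\<And>t. t \<in> {0..T} \<Longrightarrow> h t = G (z t)"
  shows "ode_sol T G x0 (\<lambda>t. if t \<in> {0..T} then z t else 0)"
  unfolding ode_sol_def
proof (intro conjI ballI allI impI)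
  show "(if 0 \<in> {0..T} then z 0 else 0) = x0" using z[of 0] T by simp
  fix t assume t: "t \<in> {0..T}"
  have "((\<lambda>t. if t \<in> {0..T} then z t else 0) has_vector_derivative h t) (at t within {0..T})"
    by (rule integral_equation_has_vector_derivative[OF h _ t]) (simp add: z)
  thus "((\<lambda>t. if t \<in> {0..T} then z t else 0) has_vector_derivative
      G (if t \<in> {0..T} then z t else 0)) (at t within {0..T})"
    using hG[OF t] t by simp
qed auto

lemma ode_sol_unique:
  fixes G :: "'v::euclidean_space \<Rightarrow> 'v"
  assumes G: "\<And>R. \<exists>L. L-lipschitz_on (cball 0 R) G"
    and z1: "ode_sol T G x0 z1" and z2: "ode_sol T G x0 z2"
  shows "z1 = z2"
proof
  fix t
  show "z1 t = z2 t"
  proof (cases "t \<in> {0..T}")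
    case True
    obtain R1 where R1: "\<And>s. s \<in> {0..T} \<Longrightarrow> norm (z1 s) \<le> R1"
      using continuous_on_compact_bound[OF compact_Icc ode_sol_continuous[OF z1]] by blast
    obtain R2 where R2: "\<And>s. s \<in> {0..T} \<Longrightarrow> norm (z2 s) \<le> R2"
      using continuous_on_compact_bound[OF compact_Icc ode_sol_continuous[OF z2]] by blast
    define R where "R = max R1 R2"
    have R: "z1 s \<in> cball 0 R \<and> z2 s \<in> cball 0 R" if "s \<in> {0..T}" for s
      using R1[OF that] R2[OF that] by (auto simp: R_def)
    obtain L where L: "L-lipschitz_on (cball 0 R) G" using G by blast
    have "norm (z1 t - z2 t) \<le> 0 * T * exp (L * t)"
    proof (rule integral_equations_solutions_close[OF ode_sol_continuous[OF z1] ode_sol_continuous[OF z2]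
          ode_sol_has_integral[OF z1] ode_sol_has_integral[OF z2] lipschitz_on_nonneg[OF L] order_refl _ True])
      fix s assume "s \<in> {0..T}"
      with R show "norm (G (z1 s) - G (z2 s)) \<le> 0 + L * norm (z1 s - z2 s)"
        by (simp add: lipschitz_on_normD[OF L])
    qed
    thus ?thesis by simp
  next
    case False
    thus ?thesis using z1 z2 unfolding ode_sol_def by simp
  qed
qed

lemma traj_eqI:
  fixes G :: "'v::euclidean_space \<Rightarrow> 'v"
  assumes "\<And>R. \<exists>L. L-lipschitz_on (cball 0 R) G" "ode_sol T G x0 z"
  shows "traj T G x0 = z"
  unfolding traj_def
proof (rule the_equality)
  fix w assume "ode_sol T G x0 w"
  thus "w = z" by (rule ode_sol_unique[OF assms(1) _ assms(2)])
qed (fact assms(2))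

section \<open>Continuously differentiable maps\<close>

lemma C2_fun_imp_C1_fun: "C2_fun g \<Longrightarrow> C1_fun g"
  unfolding C2_fun_def C1_fun_def
  by (metis continuous_at_imp_continuous_on has_derivative_continuous)

lemma C1_fun_continuous: "C1_fun g \<Longrightarrow> continuous_on UNIV g"
  unfolding C1_fun_def
  by (metis continuous_at_imp_continuous_on has_derivative_continuous)

lemma C1_fun_lipschitz_on_cball:
  fixes g :: "'a::euclidean_space \<Rightarrow> 'b::real_normed_vector"
  assumes "C1_fun g"
  shows "\<exists>L. L-lipschitz_on (cball c R) g"
proof -
  obtain Dg where Dg: "\<And>x. (g has_derivative blinfun_apply (Dg x)) (at x)" and Dg_cont: "continuous_on UNIV Dg"
    using assms unfolding C1_fun_def by blast
  obtain B where "0 \<le> B" "\<And>x. x \<in> cball c R \<Longrightarrow> norm (Dg x) \<le> B"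
    using continuous_on_compact_bound[OF compact_cball continuous_on_subset[OF Dg_cont]] by blast
  hence "B-lipschitz_on (cball c R) g"
    by (intro bounded_derivative_imp_lipschitz[where f'="\<lambda>x. blinfun_apply (Dg x)"]
        has_derivative_at_withinI[OF Dg] convex_cball)
      (auto simp: norm_blinfun.rep_eq[symmetric])
  thus ?thesis by blast
qed

definition linearization_error ::
    "('a::real_normed_vector \<Rightarrow> 'b::real_normed_vector) \<Rightarrow> ('a \<Rightarrow> 'a \<Rightarrow>\<^sub>L 'b) \<Rightarrow> 'a \<Rightarrow> 'a \<Rightarrow> 'b" where
  "linearization_error g Dg x y = g y - g x - Dg x (y - x)"

lemma C1_fun_uniform_linearization:
  fixes g :: "'a::euclidean_space \<Rightarrow> 'b::real_normed_vector"
  assumes Dg: "\<And>x. (g has_derivative blinfun_apply (Dg x)) (at x)"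
    and Dg_cont: "continuous_on UNIV Dg" and \<eta>: "0 < \<eta>"
  obtains \<rho> where "0 < \<rho>"
    "\<And>x y. x \<in> cball 0 R \<Longrightarrow> norm (y - x) \<le> \<rho> \<Longrightarrow>
       norm (linearization_error g Dg x y) \<le> \<eta> * norm (y - x)"
proof -
  have "uniformly_continuous_on (cball 0 (R + 1)) Dg"
    by (rule compact_uniformly_continuous[OF continuous_on_subset[OF Dg_cont] compact_cball]) simp
  then obtain \<delta> where \<delta>: "0 < \<delta>"
    "\<And>u x. u \<in> cball 0 (R + 1) \<Longrightarrow> x \<in> cball 0 (R + 1) \<Longrightarrow> dist u x < \<delta> \<Longrightarrow> dist (Dg u) (Dg x) < \<eta>"
    unfolding uniformly_continuous_on_def using \<eta> by metis
  define \<rho> where "\<rho> = min 1 (\<delta> / 2)"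
  have \<rho>: "0 < \<rho>" "\<rho> \<le> 1" "\<rho> < \<delta>" using \<delta> by (auto simp: \<rho>_def)
  have "norm (linearization_error g Dg x y) \<le> \<eta> * norm (y - x)"
    if x: "x \<in> cball 0 R" and y: "norm (y - x) \<le> \<rho>" for x y
  proof -
    have "norm (g y - g x - Dg x (y - x)) \<le> norm (y - x) * \<eta>"
    proof (rule differentiable_bound_linearization[where S="cball x \<rho>"])
      fix t :: real assume t: "t \<in> {0..1}"
      have "dist x (x + t *\<^sub>R (y - x)) = t * norm (y - x)" using t by (simp add: dist_norm)
      also have "\<dots> \<le> 1 * \<rho>" using t y by (intro mult_mono) auto
      finally show "x + t *\<^sub>R (y - x) \<in> cball x \<rho>" by simp
    next
      fix u show "(g has_derivative blinfun_apply (Dg u)) (at u within cball x \<rho>)"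
        by (rule has_derivative_at_withinI[OF Dg])
    next
      fix u assume u: "u \<in> cball x \<rho>"
      have "u \<in> cball 0 (R + 1)" "x \<in> cball 0 (R + 1)" "dist u x < \<delta>"
        using u x \<rho> norm_triangle_ineq[of x "u - x"] by (auto simp: dist_norm norm_minus_commute)
      hence "norm (Dg u - Dg x) < \<eta>" using \<delta>(2) by (simp add: dist_norm)
      moreover have "blinfun_apply (Dg u - Dg x) = blinfun_apply (Dg u) - blinfun_apply (Dg x)"
        by (simp add: fun_eq_iff blinfun.diff_left)
      ultimately show "onorm (blinfun_apply (Dg u) - blinfun_apply (Dg x)) \<le> \<eta>"
        by (simp add: norm_blinfun.rep_eq)
    qed (use \<rho> in auto)
    thus ?thesis by (simp add: linearization_error_def mult.commute)
  qed
  with \<rho>(1) that show ?thesis by blast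
qed

section \<open>Trajectories of the relaxed system\<close>

lemma lipschitz_on_UNIV_closest_point_compose:
  fixes g :: "'a::euclidean_space \<Rightarrow> 'b::metric_space"
  assumes g: "L-lipschitz_on K g" and K: "convex K" "closed K" "K \<noteq> {}"
  shows "L-lipschitz_on UNIV (\<lambda>u. g (closest_point K u))"
proof (rule lipschitz_onI)
  show L: "0 \<le> L" by (rule lipschitz_on_nonneg[OF g])
  fix u v :: 'a
  have "dist (g (closest_point K u)) (g (closest_point K v)) \<le> L * dist (closest_point K u) (closest_point K v)"
    using K by (intro lipschitz_onD[OF g] closest_point_in_set) auto
  also have "\<dots> \<le> L * dist u v"
    by (rule mult_left_mono[OF closest_point_lipschitz[OF K] L])
  finally show "dist (g (closest_point K u)) (g (closest_point K v)) \<le> L * dist u v" .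
qed

lemma lipschitz_on_convex_combination:
  fixes g0 g1 :: "'a::metric_space \<Rightarrow> 'b::real_normed_vector"
  assumes "L0-lipschitz_on K g0" "L1-lipschitz_on K g1" "0 \<le> \<epsilon>" "\<epsilon> \<le> 1"
  shows "(L0 + L1)-lipschitz_on K (\<lambda>u. (1 - \<epsilon>) *\<^sub>R g0 u + \<epsilon> *\<^sub>R g1 u)"
proof -
  have "(\<bar>1 - \<epsilon>\<bar> * L0 + \<bar>\<epsilon>\<bar> * L1)-lipschitz_on K (\<lambda>u. (1 - \<epsilon>) *\<^sub>R g0 u + \<epsilon> *\<^sub>R g1 u)"
    using assms(1,2) by (intro lipschitz_on_add lipschitz_on_cmult)
  moreover have "\<bar>1 - \<epsilon>\<bar> * L0 + \<bar>\<epsilon>\<bar> * L1 \<le> L0 + L1"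
    using assms lipschitz_on_nonneg[OF assms(1)] lipschitz_on_nonneg[OF assms(2)]
    by (intro add_mono) (auto intro: mult_left_le_one_le)
  ultimately show ?thesis by (rule lipschitz_on_mono[OF _ subset_refl])
qed

text \<open>Composing with the projection onto the ball makes the relaxed field globally Lipschitz;
  Gronwall keeps the solution of the projected equation inside the ball, so it solves the
  unprojected one.\<close>

lemma relaxed_ode_sol_close:
  fixes G0 G1 :: "'v::euclidean_space \<Rightarrow> 'v"
  assumes T: "0 \<le> T" and x: "ode_sol T G0 x0 x" and R: "\<And>t. t \<in> {0..T} \<Longrightarrow> norm (x t) \<le> R"
    and L0: "L0-lipschitz_on (cball 0 (R + 1)) G0" and L1: "L1-lipschitz_on (cball 0 (R + 1)) G1"
    and M: "\<And>u. u \<in> cball 0 (R + 1) \<Longrightarrow> norm (G1 u - G0 u) \<le> M"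
    and \<epsilon>: "0 \<le> \<epsilon>" "\<epsilon> \<le> 1" "\<epsilon> * M * T * exp (L0 * T) < 1"
  shows "\<exists>y. ode_sol T (\<lambda>u. (1 - \<epsilon>) *\<^sub>R G0 u + \<epsilon> *\<^sub>R G1 u) x0 y
    \<and> (\<forall>t\<in>{0..T}. norm (y t - x t) \<le> \<epsilon> * M * T * exp (L0 * T))"
proof -
  let ?S = "{0..T}" and ?K = "cball (0::'v) (R + 1)"
  have xK: "x t \<in> ?K" if "t \<in> ?S" for t using R[OF that] by simp
  have "0 \<le> R" using order_trans[OF norm_ge_zero R[of 0]] T by simp
  hence K: "convex ?K" "closed ?K" "?K \<noteq> {}" by auto
  have M0: "0 \<le> M" using M[OF xK[of 0]] T by (auto intro: order_trans[OF norm_ge_zero])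
  define \<pi> where "\<pi> = closest_point ?K"
  have \<pi>K: "\<pi> u \<in> ?K" for u unfolding \<pi>_def by (rule closest_point_in_set[OF K(2,3)])
  define F where "F t u = (1 - \<epsilon>) *\<^sub>R G0 (\<pi> u) + \<epsilon> *\<^sub>R G1 (\<pi> u)" for t :: real and u
  have F_lip: "(L0 + L1)-lipschitz_on UNIV (F t)" for t
    unfolding F_def \<pi>_def using \<epsilon>
    by (intro lipschitz_on_convex_combination lipschitz_on_UNIV_closest_point_compose L0 L1 K) auto
  obtain z where z: "continuous_on ?S z" "\<And>t. t \<in> ?S \<Longrightarrow> z t = x0 + integral {0..t} (\<lambda>s. F s (z s))"
    using integral_equation_solvable[OF T _ F_lip] by (auto simp: F_def)
  have Fz: "continuous_on ?S (\<lambda>s. F s (z s))"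
    by (rule continuous_on_lipschitz_compose[OF _ F_lip z(1)]) (simp add: F_def)
  have Fz_int: "((\<lambda>s. F s (z s)) has_integral (z t - x0)) {0..t}" if t: "t \<in> ?S" for t
    using t z(2)[OF t] integrable_continuous_real[OF continuous_on_subset[OF Fz, of "{0..t}"]]
    by (auto simp: has_integral_integral)
  have close: "norm (z t - x t) \<le> \<epsilon> * M * T * exp (L0 * T)" if t: "t \<in> ?S" for t
  proof -
    have "norm (z t - x t) \<le> (\<epsilon> * M) * T * exp (L0 * t)"
    proof (rule integral_equations_solutions_close[OF z(1) ode_sol_continuous[OF x] Fz_int
          ode_sol_has_integral[OF x] lipschitz_on_nonneg[OF L0] _ _ t])
      show "0 \<le> \<epsilon> * M" using \<epsilon> M0 by simp
      fix s assume s: "s \<in> ?S"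
      have "F s (z s) - G0 (x s) = (G0 (\<pi> (z s)) - G0 (\<pi> (x s))) + \<epsilon> *\<^sub>R (G1 (\<pi> (z s)) - G0 (\<pi> (z s)))"
        using closest_point_self[OF xK[OF s]] by (simp add: F_def \<pi>_def algebra_simps)
      also have "norm \<dots> \<le> L0 * norm (z s - x s) + \<epsilon> * M"
      proof (rule norm_triangle_le[OF add_mono])
        show "norm (G0 (\<pi> (z s)) - G0 (\<pi> (x s))) \<le> L0 * norm (z s - x s)"
          using lipschitz_on_UNIV_closest_point_compose[OF L0 K] unfolding \<pi>_def
          by (auto intro: lipschitz_on_normD)
        show "norm (\<epsilon> *\<^sub>R (G1 (\<pi> (z s)) - G0 (\<pi> (z s)))) \<le> \<epsilon> * M"
          using M[OF \<pi>K] \<epsilon> by (simp add: mult_left_mono)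
      qed
      finally show "norm (F s (z s) - G0 (x s)) \<le> \<epsilon> * M + L0 * norm (z s - x s)" by simp
    qed
    also have "\<dots> \<le> (\<epsilon> * M) * T * exp (L0 * T)"
      using t \<epsilon> M0 T lipschitz_on_nonneg[OF L0] by (intro mult_left_mono) (auto intro: mult_left_mono)
    finally show ?thesis by simp
  qed
  have zK: "z t \<in> ?K" if t: "t \<in> ?S" for t
    using norm_triangle_ineq[of "x t" "z t - x t"] R[OF t] close[OF t] \<epsilon> by simp
  have "F t (z t) = (1 - \<epsilon>) *\<^sub>R G0 (z t) + \<epsilon> *\<^sub>R G1 (z t)" if "t \<in> ?S" for t
    using closest_point_self[OF zK[OF that]] by (simp add: F_def \<pi>_def)
  hence "ode_sol T (\<lambda>u. (1 - \<epsilon>) *\<^sub>R G0 u + \<epsilon> *\<^sub>R G1 u) x0 (\<lambda>t. if t \<in> ?S then z t else 0)"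
    by (intro ode_sol_of_integral_equation[OF T Fz z(2)]) auto
  moreover have "\<forall>t\<in>?S. norm ((if t \<in> ?S then z t else 0) - x t) \<le> \<epsilon> * M * T * exp (L0 * T)"
    using close by simp
  ultimately show ?thesis by blast
qed

lemma relaxed_ode_sol_close_eventually:
  fixes G0 G1 :: "'v::euclidean_space \<Rightarrow> 'v"
  assumes T: "0 \<le> T" and x: "ode_sol T G0 x0 x" and G0: "C1_fun G0" and G1: "C1_fun G1"
  obtains C where "\<forall>\<^sub>F \<epsilon> in at_right 0. \<exists>y. ode_sol T (\<lambda>u. (1 - \<epsilon>) *\<^sub>R G0 u + \<epsilon> *\<^sub>R G1 u) x0 y
      \<and> (\<forall>t\<in>{0..T}. norm (y t - x t) \<le> C * \<epsilon>)"
proof -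
  obtain R where R: "\<And>t. t \<in> {0..T} \<Longrightarrow> norm (x t) \<le> R"
    using continuous_on_compact_bound[OF compact_Icc ode_sol_continuous[OF x]] by blast
  obtain L0 where L0: "L0-lipschitz_on (cball 0 (R + 1)) G0"
    using C1_fun_lipschitz_on_cball[OF G0] by blast
  obtain L1 where L1: "L1-lipschitz_on (cball 0 (R + 1)) G1"
    using C1_fun_lipschitz_on_cball[OF G1] by blast
  obtain M where M0: "0 \<le> M" and M: "\<And>u. u \<in> cball 0 (R + 1) \<Longrightarrow> norm (G1 u - G0 u) \<le> M"
    using continuous_on_compact_bound[OF compact_cball
        continuous_on_diff[OF C1_fun_continuous[OF G1] C1_fun_continuous[OF G0], THEN continuous_on_subset]]
    by blast
  define C where "C = M * T * exp (L0 * T)"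
  have C: "0 \<le> C" using M0 T by (simp add: C_def)
  have "\<exists>y. ode_sol T (\<lambda>u. (1 - \<epsilon>) *\<^sub>R G0 u + \<epsilon> *\<^sub>R G1 u) x0 y
      \<and> (\<forall>t\<in>{0..T}. norm (y t - x t) \<le> C * \<epsilon>)" if \<epsilon>: "0 < \<epsilon>" "\<epsilon> < min 1 (1 / (C + 1))" for \<epsilon>
  proof -
    have "\<epsilon> * C < 1"
      using \<epsilon> C mult_left_mono[of C "C + 1" \<epsilon>] by (auto simp: field_simps)
    hence "\<epsilon> * M * T * exp (L0 * T) < 1" by (simp add: C_def mult.assoc)
    from relaxed_ode_sol_close[OF T x R L0 L1 M _ _ this] \<epsilon> show ?thesis
      by (simp add: C_def algebra_simps)
  qed
  hence "\<forall>\<^sub>F \<epsilon> in at_right 0. \<exists>y. ode_sol T (\<lambda>u. (1 - \<epsilon>) *\<^sub>R G0 u + \<epsilon> *\<^sub>R G1 u) x0 y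
      \<and> (\<forall>t\<in>{0..T}. norm (y t - x t) \<le> C * \<epsilon>)"
    unfolding eventually_at_right_field using C by (intro exI[of _ "min 1 (1 / (C + 1))"]) auto
  with that show ?thesis by blast
qed

lemma xeps_close:
  fixes f :: "real^'n \<Rightarrow> real^'m \<Rightarrow> real^'n"
  assumes T: "0 \<le> T" and x: "ode_sol T (\<lambda>u. f u ab) x0 x"
    and f0: "C1_fun (\<lambda>u. f u ab)" and f1: "C1_fun (\<lambda>u. f u a)"
  obtains C where "\<forall>\<^sub>F \<epsilon> in at_right 0.
      ode_sol T (\<lambda>u. (1 - \<epsilon>) *\<^sub>R f u ab + \<epsilon> *\<^sub>R f u a) x0 (xeps T f x0 ab a \<epsilon>)
      \<and> (\<forall>t\<in>{0..T}. norm (xeps T f x0 ab a \<epsilon> t - x t) \<le> C * \<epsilon>)"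
proof -
  obtain C where ev: "\<forall>\<^sub>F \<epsilon> in at_right 0. \<exists>y.
      ode_sol T (\<lambda>u. (1 - \<epsilon>) *\<^sub>R f u ab + \<epsilon> *\<^sub>R f u a) x0 y \<and> (\<forall>t\<in>{0..T}. norm (y t - x t) \<le> C * \<epsilon>)"
    using relaxed_ode_sol_close_eventually[OF T x f0 f1] by blast
  have le1: "\<forall>\<^sub>F \<epsilon> in at_right (0::real). \<epsilon> \<le> 1"
    unfolding eventually_at_right_field by (intro exI[of _ 1]) auto
  from ev le1 eventually_at_right_less[of 0] have "\<forall>\<^sub>F \<epsilon> in at_right 0.
      ode_sol T (\<lambda>u. (1 - \<epsilon>) *\<^sub>R f u ab + \<epsilon> *\<^sub>R f u a) x0 (xeps T f x0 ab a \<epsilon>)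
      \<and> (\<forall>t\<in>{0..T}. norm (xeps T f x0 ab a \<epsilon> t - x t) \<le> C * \<epsilon>)"
  proof eventually_elim
    case (elim \<epsilon>)
    then obtain y where y: "ode_sol T (\<lambda>u. (1 - \<epsilon>) *\<^sub>R f u ab + \<epsilon> *\<^sub>R f u a) x0 y"
      "\<forall>t\<in>{0..T}. norm (y t - x t) \<le> C * \<epsilon>" by blast
    have "\<exists>L. L-lipschitz_on (cball 0 R) (\<lambda>u. (1 - \<epsilon>) *\<^sub>R f u ab + \<epsilon> *\<^sub>R f u a)" for R
    proof -
      obtain L0 L1 where "L0-lipschitz_on (cball 0 R) (\<lambda>u. f u ab)" "L1-lipschitz_on (cball 0 R) (\<lambda>u. f u a)"
        using C1_fun_lipschitz_on_cball[OF f0] C1_fun_lipschitz_on_cball[OF f1] by blast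
      thus ?thesis using elim by (intro exI[of _ "L0 + L1"] lipschitz_on_convex_combination) auto
    qed
    hence "xeps T f x0 ab a \<epsilon> = y"
      unfolding xeps_def by (rule traj_eqI[OF _ y(1)])
    with y show ?case by simp
  qed
  with that show ?thesis by blast
qed

section \<open>The costate\<close>

lemma adjoint_cart:
  fixes h :: "real^'n \<Rightarrow> 'b::euclidean_space"
  assumes "linear h"
  shows "adjoint h y = (\<chi> j. h (axis j 1) \<bullet> y)"
  using adjoint_works[OF assms, of "axis _ 1" y] by (simp add: vec_eq_iff inner_axis')

lemma norm_adjoint_blinfun_le:
  fixes B :: "'a::euclidean_space \<Rightarrow>\<^sub>L 'b::euclidean_space"
  shows "norm (adjoint (blinfun_apply B) w) \<le> norm B * norm w"
proof -
  let ?v = "adjoint (blinfun_apply B) w"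
  have "norm ?v * norm ?v = ?v \<bullet> ?v" by (simp add: dot_square_norm power2_eq_square)
  also have "\<dots> = blinfun_apply B ?v \<bullet> w"
    by (rule adjoint_works[OF bounded_linear.linear[OF blinfun.bounded_linear_right]])
  also have "\<dots> \<le> norm (blinfun_apply B ?v) * norm w" by (rule Cauchy_Schwarz_ineq2[THEN abs_le_D1])
  also have "\<dots> \<le> (norm B * norm ?v) * norm w" by (intro mult_right_mono norm_blinfun) simp
  finally have "norm ?v * norm ?v \<le> norm ?v * (norm B * norm w)" by (simp add: algebra_simps)
  thus ?thesis by (cases "?v = 0") auto
qed

lemma has_vector_derivative_reflect_Icc:
  fixes g :: "real \<Rightarrow> 'v::real_normed_vector"
  assumes t: "t \<in> {0..T}" and g: "(g has_vector_derivative g') (at (T - t) within {0..T})"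
  shows "((\<lambda>t. g (T - t)) has_vector_derivative - g') (at t within {0..T})"
proof -
  have "(\<lambda>t. T - t) ` {0..T} = {0..T}"
    by (auto simp: image_iff intro!: bexI[of _ "T - _"])
  moreover have "((\<lambda>t. T - t) has_vector_derivative -1) (at t within {0..T})"
    by (auto intro!: derivative_eq_intros)
  ultimately show ?thesis
    using vector_diff_chain_within[of "\<lambda>t. T - t" "-1" t "{0..T}" g g'] g by (simp add: o_def)
qed

definition backward_ode_sol :: "real \<Rightarrow> (real \<Rightarrow> 'v::real_normed_vector \<Rightarrow> 'v) \<Rightarrow> 'v \<Rightarrow> (real \<Rightarrow> 'v) \<Rightarrow> bool" where
  "backward_ode_sol T G lT lam \<longleftrightarrow> lam T = lT \<and>
     (\<forall>t\<in>{0..T}. (lam has_vector_derivative - G t (lam t)) (at t within {0..T})) \<and>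
     (\<forall>t. t \<notin> {0..T} \<longrightarrow> lam t = 0)"

lemma backward_ode_sol_reflect:
  assumes "backward_ode_sol T G lT lam" "s \<in> {0..T}"
  shows "((\<lambda>s. lam (T - s)) has_vector_derivative G (T - s) (lam (T - s))) (at s within {0..T})"
proof -
  have "(lam has_vector_derivative - G (T - s) (lam (T - s))) (at (T - s) within {0..T})"
    using assms unfolding backward_ode_sol_def by auto
  from has_vector_derivative_reflect_Icc[OF assms(2) this] show ?thesis by simp
qed

lemma backward_ode_sol_unique:
  fixes G :: "real \<Rightarrow> 'v::banach \<Rightarrow> 'v"
  assumes G_lip: "\<And>t. t \<in> {0..T} \<Longrightarrow> L-lipschitz_on UNIV (G t)"
    and lam1: "backward_ode_sol T G lT lam1" and lam2: "backward_ode_sol T G lT lam2"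
  shows "lam1 = lam2"
proof
  fix t
  let ?S = "{0..T}"
  have cont: "continuous_on ?S (\<lambda>s. lam (T - s))" if "backward_ode_sol T G lT lam" for lam
    using backward_ode_sol_reflect[OF that] by (rule has_vector_derivative_imp_continuous_on)
  have int: "((\<lambda>s. G (T - s) (lam (T - s))) has_integral (lam (T - u) - lT)) {0..u}"
    if "backward_ode_sol T G lT lam" "u \<in> ?S" for lam u
    using has_vector_derivative_imp_has_integral[OF backward_ode_sol_reflect[OF that(1)] that(2)] that(1)
    by (simp add: backward_ode_sol_def)
  have "lam1 (T - s) = lam2 (T - s)" if s: "s \<in> ?S" for s
  proof -
    have L: "0 \<le> L" using lipschitz_on_nonneg[OF G_lip[OF s]] .
    have "norm (lam1 (T - s) - lam2 (T - s)) \<le> 0 * T * exp (L * s)"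
    proof (rule integral_equations_solutions_close[OF cont[OF lam1] cont[OF lam2] int[OF lam1] int[OF lam2]
          L order_refl _ s])
      fix r assume "r \<in> ?S"
      thus "norm (G (T - r) (lam1 (T - r)) - G (T - r) (lam2 (T - r))) \<le> 0 + L * norm (lam1 (T - r) - lam2 (T - r))"
        using lipschitz_on_normD[OF G_lip] by simp
    qed
    thus ?thesis by simp
  qed
  from this[of "T - t"] lam1 lam2 show "lam1 t = lam2 t"
    by (cases "t \<in> ?S") (auto simp: backward_ode_sol_def)
qed

lemma backward_ode_sol_exists:
  fixes G :: "real \<Rightarrow> 'v::banach \<Rightarrow> 'v"
  assumes T: "0 \<le> T" and G_cont: "\<And>u. continuous_on {0..T} (\<lambda>t. G t u)"
    and G_lip: "\<And>t. t \<in> {0..T} \<Longrightarrow> L-lipschitz_on UNIV (G t)"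
  shows "\<exists>lam. backward_ode_sol T G lT lam"
proof -
  let ?S = "{0..T}"
  define F where "F s u = G (T - s) u" for s u
  have F_cont: "continuous_on ?S (\<lambda>s. F s u)" for u
    unfolding F_def by (rule continuous_on_compose2[OF G_cont[of u]]) (auto intro!: continuous_intros)
  have F_lip: "L-lipschitz_on UNIV (F s)" if "s \<in> ?S" for s
    unfolding F_def using that by (intro G_lip) auto
  obtain \<mu> where \<mu>: "continuous_on ?S \<mu>" "\<And>s. s \<in> ?S \<Longrightarrow> \<mu> s = lT + integral {0..s} (\<lambda>r. F r (\<mu> r))"
    using integral_equation_solvable[OF T F_cont F_lip] by blast
  have F\<mu>: "continuous_on ?S (\<lambda>r. F r (\<mu> r))" by (rule continuous_on_lipschitz_compose[OF F_cont F_lip \<mu>(1)])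
  define lam where "lam t = (if t \<in> ?S then \<mu> (T - t) else 0)" for t
  have "(lam has_vector_derivative - G t (lam t)) (at t within ?S)" if t: "t \<in> ?S" for t
  proof -
    have "T - t \<in> ?S" using t by auto
    from has_vector_derivative_reflect_Icc[OF t integral_equation_has_vector_derivative[OF F\<mu> \<mu>(2) this]]
    have d: "((\<lambda>t. \<mu> (T - t)) has_vector_derivative - G t (lam t)) (at t within ?S)"
      using t by (simp add: F_def lam_def)
    show ?thesis by (rule has_vector_derivative_transform[OF t _ d]) (simp add: lam_def)
  qed
  moreover have "lam T = lT" using \<mu>(2)[of 0] T by (simp add: lam_def)
  ultimately have "backward_ode_sol T G lT lam" by (simp add: backward_ode_sol_def lam_def)
  thus ?thesis by blast
qed

lemma costate_sol_costate:
  fixes f :: "real^'n \<Rightarrow> real^'m \<Rightarrow> real^'n" and r :: "real^'n \<Rightarrow> real^'m \<Rightarrow> real"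
  assumes T: "0 \<le> T" and x: "ode_sol T (\<lambda>x. f x ab) x0 (xsol T f x0 ab)"
    and f: "C1_fun (\<lambda>x. f x ab)" and r: "C1_fun (\<lambda>x. r x ab)"
  shows "costate_sol T f r q x0 ab (costate T f r q x0 ab)"
proof -
  let ?S = "{0..T}" and ?x = "xsol T f x0 ab"
  obtain Df where Df: "\<And>p. ((\<lambda>y. f y ab) has_derivative blinfun_apply (Df p)) (at p)"
    and Df_cont: "continuous_on UNIV Df"
    using f unfolding C1_fun_def by blast
  obtain Dr where Dr: "\<And>p. ((\<lambda>y. r y ab) has_derivative blinfun_apply (Dr p)) (at p)"
    and Dr_cont: "continuous_on UNIV Dr"
    using r unfolding C1_fun_def by blast
  define G where "G t u = adjoint (Df (?x t)) u + adjoint (Dr (?x t)) 1" for t u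
  have x_cont: "continuous_on ?S ?x" by (rule ode_sol_continuous[OF x])
  have Dfx: "continuous_on ?S (\<lambda>t. Df (?x t))" and Drx: "continuous_on ?S (\<lambda>t. Dr (?x t))"
    by (auto intro: continuous_on_compose2[OF Df_cont x_cont] continuous_on_compose2[OF Dr_cont x_cont])
  have G_cont: "continuous_on ?S (\<lambda>t. G t u)" for u
    unfolding G_def adjoint_cart[OF bounded_linear.linear[OF blinfun.bounded_linear_right]]
    by (intro continuous_intros Dfx Drx)
  obtain B where "0 \<le> B" and B: "\<And>t. t \<in> ?S \<Longrightarrow> norm (Df (?x t)) \<le> B"
    using continuous_on_compact_bound[OF compact_Icc Dfx] by blast
  have G_lip: "B-lipschitz_on UNIV (G t)" if t: "t \<in> ?S" for t
  proof (rule lipschitz_onI)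
    fix u v
    have "G t u - G t v = adjoint (Df (?x t)) (u - v)"
      unfolding G_def
      by (simp add: linear_diff[OF adjoint_linear[OF bounded_linear.linear[OF blinfun.bounded_linear_right]]])
    also have "norm \<dots> \<le> B * norm (u - v)"
      using norm_adjoint_blinfun_le[of "Df (?x t)" "u - v"] B[OF t]
      by (meson mult_right_mono norm_ge_zero order_trans)
    finally show "dist (G t u) (G t v) \<le> B * dist u v" by (simp add: dist_norm)
  qed fact
  have fd: "frechet_derivative (\<lambda>y. f y ab) (at p) = Df p" "frechet_derivative (\<lambda>y. r y ab) (at p) = Dr p" for p
    using frechet_derivative_at[OF Df] frechet_derivative_at[OF Dr] by simp_all
  have "costate_sol T f r q x0 ab = backward_ode_sol T G (adjoint (frechet_derivative q (at (?x T))) 1)"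
    by (intro ext) (simp add: costate_sol_def backward_ode_sol_def G_def fd)
  moreover have "\<exists>!lam. backward_ode_sol T G (adjoint (frechet_derivative q (at (?x T))) 1) lam"
  proof (rule ex_ex1I)
    show "\<exists>lam. backward_ode_sol T G (adjoint (frechet_derivative q (at (?x T))) 1) lam"
      by (rule backward_ode_sol_exists[OF T G_cont G_lip])
    show "lam1 = lam2" if "backward_ode_sol T G (adjoint (frechet_derivative q (at (?x T))) 1) lam1"
      "backward_ode_sol T G (adjoint (frechet_derivative q (at (?x T))) 1) lam2" for lam1 lam2
      using G_lip that by (rule backward_ode_sol_unique)
  qed
  ultimately show ?thesis
    unfolding costate_def by (simp add: theI')
qed

section \<open>The nonstandard derivative\<close>

lemma uniform_limit_continuous_compose:
  fixes \<phi> :: "'a::{real_normed_vector,heine_borel} \<Rightarrow> 'b::metric_space"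
  assumes y: "uniform_limit S y x F" and \<phi>: "continuous_on UNIV \<phi>" and x: "bounded (x ` S)"
  shows "uniform_limit S (\<lambda>\<epsilon> t. \<phi> (y \<epsilon> t)) (\<lambda>t. \<phi> (x t)) F"
proof -
  obtain R where R: "\<And>t. t \<in> S \<Longrightarrow> norm (x t) \<le> R" using x by (auto simp: bounded_iff)
  have "\<forall>\<^sub>F \<epsilon> in F. \<forall>t\<in>S. y \<epsilon> t \<in> cball 0 (R + 1)"
    using uniform_limitD[OF y zero_less_one]
  proof eventually_elim
    case (elim \<epsilon>)
    show ?case
    proof
      fix t assume t: "t \<in> S"
      have "norm (y \<epsilon> t) \<le> norm (x t) + dist (y \<epsilon> t) (x t)"
        by (metis dist_norm norm_triangle_sub add.commute)
      thus "y \<epsilon> t \<in> cball 0 (R + 1)" using R[OF t] elim t by fastforce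
    qed
  qed
  moreover have "uniformly_continuous_on (cball 0 (R + 1)) \<phi>"
    by (intro compact_uniformly_continuous continuous_on_subset[OF \<phi>]) auto
  ultimately show ?thesis
    using uniform_limit_compose_uniformly_continuous_on[OF y _ _ closed_cball] by blast
qed

lemma tendsto_integral_uniform_limit:
  fixes g :: "'a \<Rightarrow> real \<Rightarrow> 'b::banach"
  assumes g: "uniform_limit {a..b} g g0 F" and ab: "a \<le> b"
    and int: "\<forall>\<^sub>F \<epsilon> in F. g \<epsilon> integrable_on {a..b}" and int0: "g0 integrable_on {a..b}"
  shows "((\<lambda>\<epsilon>. integral {a..b} (g \<epsilon>)) \<longlongrightarrow> integral {a..b} g0) F"
proof (rule tendstoI)
  fix e :: real assume e: "0 < e"
  define e' where "e' = e / (b - a + 1)"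
  have e': "0 < e'" "e' * (b - a) < e" using e ab by (auto simp: e'_def field_simps)
  from int uniform_limitD[OF g e'(1)]
  show "\<forall>\<^sub>F \<epsilon> in F. dist (integral {a..b} (g \<epsilon>)) (integral {a..b} g0) < e"
  proof eventually_elim
    case (elim \<epsilon>)
    have "dist (integral {a..b} (g \<epsilon>)) (integral {a..b} g0) = norm (integral {a..b} (\<lambda>t. g \<epsilon> t - g0 t))"
      using elim int0 by (simp add: dist_norm integral_diff)
    also have "\<dots> \<le> integral {a..b} (\<lambda>t. e')"
      using elim int0 by (intro integral_norm_bound_integral integrable_diff) (auto simp: dist_norm less_imp_le)
    also have "\<dots> = e' * (b - a)" using ab by simp
    finally show ?case using e' by linarith
  qed
qed

lemma C1_remainder_uniform_limit:
  fixes g :: "'a::euclidean_space \<Rightarrow> 'b::real_normed_vector"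
  assumes Dg: "\<And>p. (g has_derivative blinfun_apply (Dg p)) (at p)" and Dg_cont: "continuous_on UNIV Dg"
    and x: "bounded (x ` S)"
    and close: "\<forall>\<^sub>F \<epsilon> in at_right 0. \<forall>t\<in>S. norm (y \<epsilon> t - x t) \<le> C * \<epsilon>"
  shows "uniform_limit S (\<lambda>\<epsilon> t. linearization_error g Dg (x t) (y \<epsilon> t) /\<^sub>R \<epsilon>) (\<lambda>t. 0) (at_right 0)"
proof (rule uniform_limitI)
  fix e :: real assume e: "0 < e"
  obtain R where R: "\<And>t. t \<in> S \<Longrightarrow> norm (x t) \<le> R" using x by (auto simp: bounded_iff)
  define \<eta> where "\<eta> = e / (\<bar>C\<bar> + 1)"
  have \<eta>: "0 < \<eta>" "\<eta> * \<bar>C\<bar> < e" using e by (auto simp: \<eta>_def field_simps)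
  obtain \<rho> where \<rho>: "0 < \<rho>" and lin: "\<And>u v. u \<in> cball 0 R \<Longrightarrow> norm (v - u) \<le> \<rho> \<Longrightarrow>
      norm (linearization_error g Dg u v) \<le> \<eta> * norm (v - u)"
    using C1_fun_uniform_linearization[OF Dg Dg_cont \<eta>(1)] by blast
  have small: "\<forall>\<^sub>F \<epsilon> in at_right (0::real). \<bar>C\<bar> * \<epsilon> \<le> \<rho>"
    unfolding eventually_at_right_field using \<rho>
    by (intro exI[of _ "\<rho> / (\<bar>C\<bar> + 1)"]) (auto simp: field_simps intro: order_trans[OF _ mult_right_mono[of "\<bar>C\<bar>" "\<bar>C\<bar> + 1"]])
  from close small eventually_at_right_less[of 0]
  show "\<forall>\<^sub>F \<epsilon> in at_right 0. \<forall>t\<in>S.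
      dist (linearization_error g Dg (x t) (y \<epsilon> t) /\<^sub>R \<epsilon>) 0 < e"
  proof eventually_elim
    case (elim \<epsilon>)
    show ?case
    proof
      fix t assume t: "t \<in> S"
      have d: "norm (y \<epsilon> t - x t) \<le> \<bar>C\<bar> * \<epsilon>"
        using elim t by (auto intro: order_trans[OF _ mult_right_mono[OF abs_ge_self]])
      have "norm (linearization_error g Dg (x t) (y \<epsilon> t)) \<le> \<eta> * norm (y \<epsilon> t - x t)"
        using R[OF t] d elim by (intro lin) auto
      also have "\<dots> \<le> \<eta> * (\<bar>C\<bar> * \<epsilon>)" using d \<eta> by (intro mult_left_mono) auto
      also have "\<dots> < e * \<epsilon>" using \<eta>(2) elim by (simp add: mult.assoc[symmetric])
      finally have "norm (linearization_error g Dg (x t) (y \<epsilon> t)) / \<epsilon> < e"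
        using elim by (simp add: pos_divide_less_eq)
      thus "dist (linearization_error g Dg (x t) (y \<epsilon> t) /\<^sub>R \<epsilon>) 0 < e"
        using elim by (simp add: dist_norm divide_inverse_commute)
    qed
  qed
qed

lemma uniform_limit_at_right_0_linear_rate:
  fixes y :: "real \<Rightarrow> 'a \<Rightarrow> 'b::real_normed_vector"
  assumes "\<forall>\<^sub>F \<epsilon> in at_right 0. \<forall>t\<in>S. norm (y \<epsilon> t - x t) \<le> C * \<epsilon>"
  shows "uniform_limit S y x (at_right 0)"
proof (rule uniform_limitI)
  fix e :: real assume e: "0 < e"
  have "\<forall>\<^sub>F \<epsilon> in at_right (0::real). \<bar>C\<bar> * \<epsilon> < e"
    unfolding eventually_at_right_field using e
    by (intro exI[of _ "e / (\<bar>C\<bar> + 1)"]) (auto simp: field_simps intro: le_less_trans[OF mult_right_mono[of "\<bar>C\<bar>" "\<bar>C\<bar> + 1"]])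
  with assms eventually_at_right_less[of 0]
  show "\<forall>\<^sub>F \<epsilon> in at_right 0. \<forall>t\<in>S. dist (y \<epsilon> t) (x t) < e"
  proof eventually_elim
    case (elim \<epsilon>)
    show ?case
    proof
      fix t assume "t \<in> S"
      hence "norm (y \<epsilon> t - x t) \<le> C * \<epsilon>" using elim by blast
      also have "\<dots> \<le> \<bar>C\<bar> * \<epsilon>" using elim by (intro mult_right_mono) auto
      finally show "dist (y \<epsilon> t) (x t) < e" using elim by (simp add: dist_norm)
    qed
  qed
qed

lemma has_vector_derivative_inner:
  fixes f g :: "real \<Rightarrow> 'v::real_inner"
  assumes "(f has_vector_derivative f') (at t within S)" "(g has_vector_derivative g') (at t within S)"
  shows "((\<lambda>t. f t \<bullet> g t) has_vector_derivative (f t \<bullet> g' + f' \<bullet> g t)) (at t within S)"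
  using has_derivative_inner[OF assms[unfolded has_vector_derivative_def]]
  unfolding has_vector_derivative_def by (rule has_derivative_eq_rhs) (simp add: fun_eq_iff algebra_simps)

definition hamiltonian ::
    "('x::real_inner \<Rightarrow> 'a \<Rightarrow> 'x) \<Rightarrow> ('x \<Rightarrow> 'a \<Rightarrow> real) \<Rightarrow> 'x \<Rightarrow> 'x \<Rightarrow> 'a \<Rightarrow> real" where
  "hamiltonian f r x lam \<alpha> = lam \<bullet> f x \<alpha> + r x \<alpha>"

text \<open>Pairing the costate with \<open>y - x\<close> turns the first-order variation of the payoff into a
  boundary term, which the terminal condition of the costate cancels.\<close>

lemma costate_pairing_has_integral:
  fixes f :: "real^'n \<Rightarrow> real^'m \<Rightarrow> real^'n"
  assumes T: "0 \<le> T"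
    and x: "ode_sol T (\<lambda>u. f u ab) x0 x"
    and y: "ode_sol T (\<lambda>u. (1 - \<epsilon>) *\<^sub>R f u ab + \<epsilon> *\<^sub>R f u a) x0 y"
    and lam_T: "lam T = adjoint (blinfun_apply (Dq (x T))) 1"
    and lam': "\<And>t. t \<in> {0..T} \<Longrightarrow> (lam has_vector_derivative
        - (adjoint (blinfun_apply (Df (x t))) (lam t) + adjoint (blinfun_apply (Dr (x t))) 1)) (at t within {0..T})"
  shows "((\<lambda>t. lam t \<bullet> linearization_error (\<lambda>u. f u ab) Df (x t) (y t) - Dr (x t) (y t - x t)
      + \<epsilon> * (lam t \<bullet> (f (y t) a - f (y t) ab))) has_integral Dq (x T) (y T - x T)) {0..T}"
proof -
  let ?S = "{0..T}"
  have lin: "linear (blinfun_apply B)" for B :: "(real^'n) \<Rightarrow>\<^sub>L 'b::euclidean_space"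
    by (rule bounded_linear.linear[OF blinfun.bounded_linear_right])
  have "((\<lambda>t. lam t \<bullet> (y t - x t)) has_vector_derivative
      lam t \<bullet> linearization_error (\<lambda>u. f u ab) Df (x t) (y t) - Dr (x t) (y t - x t)
      + \<epsilon> * (lam t \<bullet> (f (y t) a - f (y t) ab))) (at t within ?S)" if t: "t \<in> ?S" for t
  proof -
    have "(y has_vector_derivative (1 - \<epsilon>) *\<^sub>R f (y t) ab + \<epsilon> *\<^sub>R f (y t) a) (at t within ?S)"
      "(x has_vector_derivative f (x t) ab) (at t within ?S)"
      using x y t unfolding ode_sol_def by auto
    from has_vector_derivative_inner[OF lam'[OF t] has_vector_derivative_diff[OF this]]
    show ?thesis
      using adjoint_works[OF lin, of "y t - x t" "Df (x t)" "lam t"]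
        adjoint_works[OF lin, of "y t - x t" "Dr (x t)" 1]
      by (simp add: linearization_error_def inner_diff_right inner_add_right inner_add_left
          inner_commute algebra_simps)
  qed
  from fundamental_theorem_of_calculus[OF T this]
  show ?thesis
    using adjoint_works[OF lin, of "y T - x T" "Dq (x T)" 1] lam_T x y
    by (simp add: ode_sol_def inner_commute)
qed

lemma costate_variation_identity:
  fixes f :: "real^'n \<Rightarrow> real^'m \<Rightarrow> real^'n" and r :: "real^'n \<Rightarrow> real^'m \<Rightarrow> real"
    and q :: "real^'n \<Rightarrow> real"
  assumes T: "0 \<le> T"
    and x: "ode_sol T (\<lambda>u. f u ab) x0 x"
    and y: "ode_sol T (\<lambda>u. (1 - \<epsilon>) *\<^sub>R f u ab + \<epsilon> *\<^sub>R f u a) x0 y"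
    and lam_T: "lam T = adjoint (blinfun_apply (Dq (x T))) 1"
    and lam': "\<And>t. t \<in> {0..T} \<Longrightarrow> (lam has_vector_derivative
        - (adjoint (blinfun_apply (Df (x t))) (lam t) + adjoint (blinfun_apply (Dr (x t))) 1)) (at t within {0..T})"
    and Df: "continuous_on UNIV Df" and Dr: "continuous_on UNIV Dr"
    and f0: "continuous_on UNIV (\<lambda>u. f u ab)" and f1: "continuous_on UNIV (\<lambda>u. f u a)"
    and r0: "continuous_on UNIV (\<lambda>u. r u ab)" and r1: "continuous_on UNIV (\<lambda>u. r u a)"
  shows "Jeps T r q ab a \<epsilon> y - Jc T r q x ab
    = \<epsilon> * integral {0..T} (\<lambda>t. hamiltonian f r (y t) (lam t) a - hamiltonian f r (y t) (lam t) ab)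
      + integral {0..T} (\<lambda>t. linearization_error (\<lambda>u. r u ab) Dr (x t) (y t)
          + lam t \<bullet> linearization_error (\<lambda>u. f u ab) Df (x t) (y t))
      + linearization_error q Dq (x T) (y T)"
proof -
  let ?S = "{0..T}"
  have xc: "continuous_on ?S x" and yc: "continuous_on ?S y"
    using ode_sol_continuous[OF x] ode_sol_continuous[OF y] .
  have lc: "continuous_on ?S lam"
    using lam' by (rule has_vector_derivative_imp_continuous_on)
  note comp = continuous_on_compose2[OF _ _ subset_UNIV]
  have int: "h integrable_on ?S" if "continuous_on ?S h" for h :: "real \<Rightarrow> real"
    using that by (rule integrable_continuous_real)
  define g where "g t = hamiltonian f r (y t) (lam t) a - hamiltonian f r (y t) (lam t) ab" for t
  define \<rho> where "\<rho> t = linearization_error (\<lambda>u. r u ab) Dr (x t) (y t)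
      + lam t \<bullet> linearization_error (\<lambda>u. f u ab) Df (x t) (y t)" for t
  define p' where "p' t = lam t \<bullet> linearization_error (\<lambda>u. f u ab) Df (x t) (y t) - Dr (x t) (y t - x t)
      + \<epsilon> * (lam t \<bullet> (f (y t) a - f (y t) ab))" for t
  have "(g has_integral integral ?S g) ?S" "(\<rho> has_integral integral ?S \<rho>) ?S"
    unfolding g_def \<rho>_def hamiltonian_def linearization_error_def
    by (intro integrable_integral int continuous_intros comp[OF f0] comp[OF f1] comp[OF r0] comp[OF r1]
        comp[OF Df] comp[OF Dr] xc yc lc)+
  moreover have "(p' has_integral Dq (x T) (y T - x T)) ?S"
    unfolding p'_def using lam_T lam' by (rule costate_pairing_has_integral[OF T x y])
  ultimately have "((\<lambda>t. \<epsilon> * g t + \<rho> t - p' t) has_integral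
      (\<epsilon> * integral ?S g + integral ?S \<rho> - Dq (x T) (y T - x T))) ?S"
    by (intro has_integral_diff has_integral_add has_integral_mult_right)
  moreover have "\<epsilon> * g t + \<rho> t - p' t = (1 - \<epsilon>) * r (y t) ab + \<epsilon> * r (y t) a - r (x t) ab" for t
    by (simp add: g_def \<rho>_def p'_def hamiltonian_def linearization_error_def inner_diff_right algebra_simps)
  ultimately have "((\<lambda>t. (1 - \<epsilon>) * r (y t) ab + \<epsilon> * r (y t) a - r (x t) ab) has_integral
      (\<epsilon> * integral ?S g + integral ?S \<rho> - Dq (x T) (y T - x T))) ?S"
    by simp
  moreover have "((\<lambda>t. (1 - \<epsilon>) * r (y t) ab + \<epsilon> * r (y t) a - r (x t) ab) has_integral
      ((1 - \<epsilon>) * integral ?S (\<lambda>t. r (y t) ab) + \<epsilon> * integral ?S (\<lambda>t. r (y t) a)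
        - integral ?S (\<lambda>t. r (x t) ab))) ?S"
    by (intro has_integral_diff has_integral_add has_integral_mult_right integrable_integral int
        comp[OF r0] comp[OF r1] xc yc)
  ultimately show ?thesis
    unfolding Jeps_def Jc_def g_def[symmetric] \<rho>_def[symmetric]
    by (auto dest: has_integral_unique simp: linearization_error_def algebra_simps)
qed

lemma relaxed_payoff_quotient_eq:
  fixes f :: "real^'n \<Rightarrow> real^'m \<Rightarrow> real^'n" and r :: "real^'n \<Rightarrow> real^'m \<Rightarrow> real"
    and q :: "real^'n \<Rightarrow> real"
  assumes T: "0 \<le> T" and \<epsilon>: "\<epsilon> \<noteq> 0"
    and x: "ode_sol T (\<lambda>u. f u ab) x0 x"
    and y: "ode_sol T (\<lambda>u. (1 - \<epsilon>) *\<^sub>R f u ab + \<epsilon> *\<^sub>R f u a) x0 y"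
    and lam_T: "lam T = adjoint (blinfun_apply (Dq (x T))) 1"
    and lam': "\<And>t. t \<in> {0..T} \<Longrightarrow> (lam has_vector_derivative
        - (adjoint (blinfun_apply (Df (x t))) (lam t) + adjoint (blinfun_apply (Dr (x t))) 1)) (at t within {0..T})"
    and Df: "continuous_on UNIV Df" and Dr: "continuous_on UNIV Dr"
    and f0: "continuous_on UNIV (\<lambda>u. f u ab)" and f1: "continuous_on UNIV (\<lambda>u. f u a)"
    and r0: "continuous_on UNIV (\<lambda>u. r u ab)" and r1: "continuous_on UNIV (\<lambda>u. r u a)"
  shows "(Jeps T r q ab a \<epsilon> y - Jc T r q x ab) / \<epsilon>
    = integral {0..T} (\<lambda>t. hamiltonian f r (y t) (lam t) a - hamiltonian f r (y t) (lam t) ab)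
      + integral {0..T} (\<lambda>t. linearization_error (\<lambda>u. r u ab) Dr (x t) (y t) /\<^sub>R \<epsilon>
          + lam t \<bullet> (linearization_error (\<lambda>u. f u ab) Df (x t) (y t) /\<^sub>R \<epsilon>))
      + linearization_error q Dq (x T) (y T) /\<^sub>R \<epsilon>"
proof -
  define R where "R t = linearization_error (\<lambda>u. r u ab) Dr (x t) (y t)
      + lam t \<bullet> linearization_error (\<lambda>u. f u ab) Df (x t) (y t)" for t
  have "(\<lambda>t. linearization_error (\<lambda>u. r u ab) Dr (x t) (y t) /\<^sub>R \<epsilon>
      + lam t \<bullet> (linearization_error (\<lambda>u. f u ab) Df (x t) (y t) /\<^sub>R \<epsilon>)) = (\<lambda>t. R t / \<epsilon>)"
    by (simp add: fun_eq_iff R_def divide_inverse_commute algebra_simps)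
  hence "integral {0..T} (\<lambda>t. linearization_error (\<lambda>u. r u ab) Dr (x t) (y t) /\<^sub>R \<epsilon>
      + lam t \<bullet> (linearization_error (\<lambda>u. f u ab) Df (x t) (y t) /\<^sub>R \<epsilon>)) = integral {0..T} R / \<epsilon>"
    by simp
  moreover have "linearization_error q Dq (x T) (y T) /\<^sub>R \<epsilon> = linearization_error q Dq (x T) (y T) / \<epsilon>"
    by (simp add: divide_inverse_commute)
  moreover have "Jeps T r q ab a \<epsilon> y - Jc T r q x ab
      = \<epsilon> * integral {0..T} (\<lambda>t. hamiltonian f r (y t) (lam t) a - hamiltonian f r (y t) (lam t) ab)
        + integral {0..T} R + linearization_error q Dq (x T) (y T)"
    unfolding R_def using x y lam_T lam' Df Dr f0 f1 r0 r1 by (rule costate_variation_identity[OF T])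
  ultimately show ?thesis using \<epsilon> by (simp add: add_divide_distrib)
qed

lemma tendsto_integral_hamiltonian_difference:
  fixes f :: "real^'n \<Rightarrow> real^'m \<Rightarrow> real^'n" and r :: "real^'n \<Rightarrow> real^'m \<Rightarrow> real" and T :: real
  assumes T: "0 \<le> T" and y: "uniform_limit {0..T} y x F"
    and yc: "\<forall>\<^sub>F \<epsilon> in F. continuous_on {0..T} (y \<epsilon>)"
    and xc: "continuous_on {0..T} x" and lc: "continuous_on {0..T} lam"
    and f0: "continuous_on UNIV (\<lambda>u. f u ab)" and f1: "continuous_on UNIV (\<lambda>u. f u a)"
    and r0: "continuous_on UNIV (\<lambda>u. r u ab)" and r1: "continuous_on UNIV (\<lambda>u. r u a)"
  shows "((\<lambda>\<epsilon>. integral {0..T} (\<lambda>t. hamiltonian f r (y \<epsilon> t) (lam t) a - hamiltonian f r (y \<epsilon> t) (lam t) ab))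
    \<longlongrightarrow> integral {0..T} (\<lambda>t. hamiltonian f r (x t) (lam t) a - hamiltonian f r (x t) (lam t) ab)) F"
  unfolding hamiltonian_def
proof (rule tendsto_integral_uniform_limit)
  show "0 \<le> T" by (fact T)
  note comp = continuous_on_compose2[OF _ _ subset_UNIV]
  have bounded: "bounded (h ` {0..T})" if "continuous_on {0..T} h" for h :: "real \<Rightarrow> real^'n"
    using that by (intro compact_imp_bounded compact_continuous_image compact_Icc)
  show "uniform_limit {0..T} (\<lambda>\<epsilon> t. lam t \<bullet> f (y \<epsilon> t) a + r (y \<epsilon> t) a - (lam t \<bullet> f (y \<epsilon> t) ab + r (y \<epsilon> t) ab))
      (\<lambda>t. lam t \<bullet> f (x t) a + r (x t) a - (lam t \<bullet> f (x t) ab + r (x t) ab)) F"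
    by (intro uniform_limit_intros uniform_limit_continuous_compose[OF y] f0 f1 r0 r1 bounded xc lc
        comp[OF f0] comp[OF f1])
  show "\<forall>\<^sub>F \<epsilon> in F. (\<lambda>t. lam t \<bullet> f (y \<epsilon> t) a + r (y \<epsilon> t) a - (lam t \<bullet> f (y \<epsilon> t) ab + r (y \<epsilon> t) ab))
      integrable_on {0..T}"
    using yc by eventually_elim (intro integrable_continuous_real continuous_intros
        comp[OF f0] comp[OF f1] comp[OF r0] comp[OF r1] lc)
  show "(\<lambda>t. lam t \<bullet> f (x t) a + r (x t) a - (lam t \<bullet> f (x t) ab + r (x t) ab)) integrable_on {0..T}"
    by (intro integrable_continuous_real continuous_intros comp[OF f0] comp[OF f1] comp[OF r0] comp[OF r1]
        lc xc)
qed

lemma relaxed_payoff_quotient_tendsto: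
  fixes f :: "real^'n \<Rightarrow> real^'m \<Rightarrow> real^'n" and r :: "real^'n \<Rightarrow> real^'m \<Rightarrow> real"
    and q :: "real^'n \<Rightarrow> real"
  assumes T: "0 \<le> T" and x: "ode_sol T (\<lambda>u. f u ab) x0 x"
    and y: "\<forall>\<^sub>F \<epsilon> in at_right 0. ode_sol T (\<lambda>u. (1 - \<epsilon>) *\<^sub>R f u ab + \<epsilon> *\<^sub>R f u a) x0 (y \<epsilon>)
      \<and> (\<forall>t\<in>{0..T}. norm (y \<epsilon> t - x t) \<le> C * \<epsilon>)"
    and lam_T: "lam T = adjoint (blinfun_apply (Dq (x T))) 1"
    and lam': "\<And>t. t \<in> {0..T} \<Longrightarrow> (lam has_vector_derivative
        - (adjoint (blinfun_apply (Df (x t))) (lam t) + adjoint (blinfun_apply (Dr (x t))) 1)) (at t within {0..T})"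
    and Df: "\<And>p. ((\<lambda>u. f u ab) has_derivative blinfun_apply (Df p)) (at p)" "continuous_on UNIV Df"
    and Dr: "\<And>p. ((\<lambda>u. r u ab) has_derivative blinfun_apply (Dr p)) (at p)" "continuous_on UNIV Dr"
    and Dq: "\<And>p. (q has_derivative blinfun_apply (Dq p)) (at p)" "continuous_on UNIV Dq"
    and f1: "continuous_on UNIV (\<lambda>u. f u a)" and r1: "continuous_on UNIV (\<lambda>u. r u a)"
  shows "((\<lambda>\<epsilon>. (Jeps T r q ab a \<epsilon> (y \<epsilon>) - Jc T r q x ab) / \<epsilon>)
    \<longlongrightarrow> integral {0..T} (\<lambda>t. hamiltonian f r (x t) (lam t) a - hamiltonian f r (x t) (lam t) ab)) (at_right 0)"
proof -
  let ?S = "{0..T}"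
  have f0: "continuous_on UNIV (\<lambda>u. f u ab)" and r0: "continuous_on UNIV (\<lambda>u. r u ab)"
    using has_derivative_continuous[OF Df(1)] has_derivative_continuous[OF Dr(1)]
    by (auto intro: continuous_at_imp_continuous_on)
  note comp = continuous_on_compose2[OF _ _ subset_UNIV]
  have xc: "continuous_on ?S x" by (rule ode_sol_continuous[OF x])
  have lc: "continuous_on ?S lam" using lam' by (rule has_vector_derivative_imp_continuous_on)
  have xb: "bounded (x ` ?S)" and lb: "bounded (lam ` ?S)"
    by (intro compact_imp_bounded compact_continuous_image compact_Icc xc lc)+
  have close: "\<forall>\<^sub>F \<epsilon> in at_right 0. \<forall>t\<in>?S. norm (y \<epsilon> t - x t) \<le> C * \<epsilon>"
    using y by eventually_elim blast
  have yc: "\<forall>\<^sub>F \<epsilon> in at_right 0. continuous_on ?S (y \<epsilon>)"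
    using y by eventually_elim (blast intro: ode_sol_continuous)
  define H where "H \<epsilon> t = hamiltonian f r (y \<epsilon> t) (lam t) a - hamiltonian f r (y \<epsilon> t) (lam t) ab" for \<epsilon> t
  define E where "E \<epsilon> t = linearization_error (\<lambda>u. r u ab) Dr (x t) (y \<epsilon> t) /\<^sub>R \<epsilon>
      + lam t \<bullet> (linearization_error (\<lambda>u. f u ab) Df (x t) (y \<epsilon> t) /\<^sub>R \<epsilon>)" for \<epsilon> t
  define Eq where "Eq \<epsilon> = linearization_error q Dq (x T) (y \<epsilon> T) /\<^sub>R \<epsilon>" for \<epsilon>
  have split: "\<forall>\<^sub>F \<epsilon> in at_right 0. integral ?S (H \<epsilon>) + integral ?S (E \<epsilon>) + Eq \<epsilon>
      = (Jeps T r q ab a \<epsilon> (y \<epsilon>) - Jc T r q x ab) / \<epsilon>"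
    using y eventually_at_right_less[of 0]
  proof eventually_elim
    case (elim \<epsilon>)
    hence "\<epsilon> \<noteq> 0" by simp
    thus ?case unfolding H_def E_def Eq_def
      using x conjunct1[OF elim(1)] lam_T lam' Df(2) Dr(2) f0 f1 r0 r1
      by (rule relaxed_payoff_quotient_eq[OF T, symmetric])
  qed
  have "((\<lambda>\<epsilon>. integral ?S (H \<epsilon>)) \<longlongrightarrow>
      integral ?S (\<lambda>t. hamiltonian f r (x t) (lam t) a - hamiltonian f r (x t) (lam t) ab)) (at_right 0)"
    unfolding H_def using uniform_limit_at_right_0_linear_rate[OF close]
    by (rule tendsto_integral_hamiltonian_difference[OF T _ yc xc lc f0 f1 r0 r1])
  moreover have "((\<lambda>\<epsilon>. integral ?S (E \<epsilon>)) \<longlongrightarrow> integral ?S (\<lambda>t. 0 + lam t \<bullet> 0)) (at_right 0)"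
  proof (rule tendsto_integral_uniform_limit[OF _ T])
    show "uniform_limit ?S E (\<lambda>t. 0 + lam t \<bullet> 0) (at_right 0)"
      unfolding E_def
      by (intro uniform_limit_intros C1_remainder_uniform_limit[OF Dr xb close]
          C1_remainder_uniform_limit[OF Df xb close] lb) (auto simp: bounded_iff)
    show "\<forall>\<^sub>F \<epsilon> in at_right 0. E \<epsilon> integrable_on ?S"
      using yc by eventually_elim (unfold E_def linearization_error_def, intro integrable_continuous_real
          continuous_intros comp[OF f0] comp[OF r0] comp[OF Df(2)] comp[OF Dr(2)] lc xc)
  qed (simp add: integrable_0)
  moreover have "(Eq \<longlongrightarrow> 0) (at_right 0)"
    using tendsto_uniform_limitI[OF C1_remainder_uniform_limit[OF Dq xb close]] T
    unfolding Eq_def by auto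
  ultimately have "((\<lambda>\<epsilon>. integral ?S (H \<epsilon>) + integral ?S (E \<epsilon>) + Eq \<epsilon>)
      \<longlongrightarrow> integral ?S (\<lambda>t. hamiltonian f r (x t) (lam t) a - hamiltonian f r (x t) (lam t) ab) + 0 + 0)
      (at_right 0)"
    by (intro tendsto_add) simp_all
  from Lim_transform_eventually[OF this split] show ?thesis by simp
qed

lemma nonstandard_derivative_tendsto:
  fixes f :: "real^'n \<Rightarrow> real^'m \<Rightarrow> real^'n" and r :: "real^'n \<Rightarrow> real^'m \<Rightarrow> real"
    and q :: "real^'n \<Rightarrow> real"
  assumes T: "0 \<le> T" and x: "ode_sol T (\<lambda>u. f u ab) x0 (xsol T f x0 ab)"
    and f0: "C1_fun (\<lambda>u. f u ab)" and f1: "C1_fun (\<lambda>u. f u a)"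
    and r0: "C1_fun (\<lambda>u. r u ab)" and r1: "C1_fun (\<lambda>u. r u a)" and q: "C1_fun q"
  shows "((\<lambda>\<epsilon>. (Jeps T r q ab a \<epsilon> (xeps T f x0 ab a \<epsilon>) - Jc T r q (xsol T f x0 ab) ab) / \<epsilon>)
     \<longlongrightarrow> integral {0..T} (\<lambda>t. hamiltonian f r (xsol T f x0 ab t) (costate T f r q x0 ab t) a
       - hamiltonian f r (xsol T f x0 ab t) (costate T f r q x0 ab t) ab)) (at_right 0)"
proof -
  obtain Df where Df: "\<And>p. ((\<lambda>u. f u ab) has_derivative blinfun_apply (Df p)) (at p)" "continuous_on UNIV Df"
    using f0 unfolding C1_fun_def by blast
  obtain Dr where Dr: "\<And>p. ((\<lambda>u. r u ab) has_derivative blinfun_apply (Dr p)) (at p)" "continuous_on UNIV Dr"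
    using r0 unfolding C1_fun_def by blast
  obtain Dq where Dq: "\<And>p. (q has_derivative blinfun_apply (Dq p)) (at p)" "continuous_on UNIV Dq"
    using q unfolding C1_fun_def by blast
  have "costate_sol T f r q x0 ab (costate T f r q x0 ab)"
    using x f0 r0 by (rule costate_sol_costate[OF T])
  hence lam_T: "costate T f r q x0 ab T = adjoint (blinfun_apply (Dq (xsol T f x0 ab T))) 1"
    and lam': "\<And>t. t \<in> {0..T} \<Longrightarrow> (costate T f r q x0 ab has_vector_derivative
        - (adjoint (blinfun_apply (Df (xsol T f x0 ab t))) (costate T f r q x0 ab t)
          + adjoint (blinfun_apply (Dr (xsol T f x0 ab t))) 1)) (at t within {0..T})"
    unfolding costate_sol_def
    by (simp_all add: frechet_derivative_at[OF Df(1), symmetric] frechet_derivative_at[OF Dr(1), symmetric]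
        frechet_derivative_at[OF Dq(1), symmetric])
  obtain C where y: "\<forall>\<^sub>F \<epsilon> in at_right 0.
      ode_sol T (\<lambda>u. (1 - \<epsilon>) *\<^sub>R f u ab + \<epsilon> *\<^sub>R f u a) x0 (xeps T f x0 ab a \<epsilon>)
      \<and> (\<forall>t\<in>{0..T}. norm (xeps T f x0 ab a \<epsilon> t - xsol T f x0 ab t) \<le> C * \<epsilon>)"
    using xeps_close[OF T x f0 f1] by blast
  show ?thesis
    using x y lam_T lam' Df Dr Dq C1_fun_continuous[OF f1] C1_fun_continuous[OF r1]
    by (rule relaxed_payoff_quotient_tendsto[OF T])
qed

theorem theorem1:
  fixes T :: real and X :: "(real^'n) set" and x0 :: "real^'n"
    and f :: "real^'n \<Rightarrow> real^'m \<Rightarrow> real^'n"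
    and r :: "real^'n \<Rightarrow> real^'m \<Rightarrow> real" and q :: "real^'n \<Rightarrow> real"
    and ab :: "real^'m" and i :: 'm
  assumes T_pos: "T > 0"
    and x0_in: "x0 \<in> X"
    and sol_ex: "\<forall>\<beta>. binary \<beta> \<longrightarrow> (\<exists>!z. ode_sol T (\<lambda>x. f x \<beta>) x0 z)"
    and A1: "\<forall>\<alpha>. binary \<alpha> \<longrightarrow> C2_fun (\<lambda>x. f x \<alpha>) \<and> (\<exists>L. L-lipschitz_on X (\<lambda>x. f x \<alpha>))"
    and A3_r: "\<forall>\<alpha>. binary \<alpha> \<longrightarrow> C1_fun (\<lambda>x. r x \<alpha>)"
    and A3_q: "C1_fun q"
    and ab_bin: "binary ab"
  shows
   "(ab $ i = 0 \<longrightarrow>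
      ((\<lambda>\<epsilon>. (Jeps T r q ab (ab + axis i 1) \<epsilon> (xeps T f x0 ab (ab + axis i 1) \<epsilon>)
               - Jc T r q (xsol T f x0 ab) ab) / \<epsilon>)
       \<longlongrightarrow> integral {0..T} (\<lambda>t.
              (f (xsol T f x0 ab t) (ab + axis i 1) - f (xsol T f x0 ab t) ab) \<bullet> costate T f r q x0 ab t
              + r (xsol T f x0 ab t) (ab + axis i 1) - r (xsol T f x0 ab t) ab)) (at_right 0))
    \<and>
    (ab $ i = 1 \<longrightarrow>
      ((\<lambda>\<epsilon>. (Jc T r q (xsol T f x0 ab) ab
               - Jeps T r q ab (ab - axis i 1) \<epsilon> (xeps T f x0 ab (ab - axis i 1) \<epsilon>)) / \<epsilon>)
       \<longlongrightarrow> integral {0..T} (\<lambda>t.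
              (f (xsol T f x0 ab t) ab - f (xsol T f x0 ab t) (ab - axis i 1)) \<bullet> costate T f r q x0 ab t
              + r (xsol T f x0 ab t) ab - r (xsol T f x0 ab t) (ab - axis i 1))) (at_right 0))"
proof -
  let ?x = "xsol T f x0 ab" and ?lam = "costate T f r q x0 ab"
  have f_C1: "C1_fun (\<lambda>x. f x \<alpha>)" if "binary \<alpha>" for \<alpha>
    using A1 that C2_fun_imp_C1_fun by blast
  have x: "ode_sol T (\<lambda>x. f x ab) x0 ?x"
    unfolding xsol_def traj_def by (rule theI'[OF sol_ex[rule_format, OF ab_bin]])
  have lim: "((\<lambda>\<epsilon>. (Jeps T r q ab a \<epsilon> (xeps T f x0 ab a \<epsilon>) - Jc T r q ?x ab) / \<epsilon>)
      \<longlongrightarrow> integral {0..T} (\<lambda>t. hamiltonian f r (?x t) (?lam t) a - hamiltonian f r (?x t) (?lam t) ab))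
      (at_right 0)" if "binary a" for a
    using T_pos x f_C1[OF ab_bin] f_C1[OF that] A3_r ab_bin that A3_q
    by (intro nonstandard_derivative_tendsto) auto
  have lim_rev: "((\<lambda>\<epsilon>. (Jc T r q ?x ab - Jeps T r q ab a \<epsilon> (xeps T f x0 ab a \<epsilon>)) / \<epsilon>)
      \<longlongrightarrow> integral {0..T} (\<lambda>t. hamiltonian f r (?x t) (?lam t) ab - hamiltonian f r (?x t) (?lam t) a))
      (at_right 0)" if "binary a" for a
    using tendsto_minus[OF lim[OF that]]
    by (simp add: minus_divide_left integral_neg[symmetric] del: integral_neg)
  have H: "hamiltonian f r u l \<alpha> - hamiltonian f r u l \<beta> = (f u \<alpha> - f u \<beta>) \<bullet> l + r u \<alpha> - r u \<beta>"
    for u l \<alpha> \<beta> by (simp add: hamiltonian_def inner_commute[of _ l] inner_diff_right)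
  have "binary (ab + axis i 1)" if "ab $ i = 0"
    using ab_bin that by (auto simp: binary_def axis_def)
  moreover have "binary (ab - axis i 1)" if "ab $ i = 1"
    using ab_bin that by (auto simp: binary_def axis_def)
  ultimately show ?thesis using lim lim_rev unfolding H by blast
qed

end
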